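(* Let $L$ be a finite-dimensional real vector space with the structures described in the context ($[\cdot,\cdot]$, $\omega$, $M$, $N$, $Q$, $q$, $J$, $g$, $\{\cdot,\cdot\}$, $j$, $\mu_Q$, $\mu_L$, $\nu_L$, $\alpha$, $B$, $\mathcal{H}^{\mathrm{S}}$, $\mathcal{H}^{\mathrm{H}}$, $K^{\mathrm{H}}_\tau$, $\mathcal{H}^{\mathrm{H,c}}$). Then there exist a linear subspace $\mathcal{H}^{\mathrm{S,c}}\subseteq\mathcal{H}^{\mathrm{S}}$ and an isometric linear isomorphism $\mathcal{B}:\mathcal{H}^{\mathrm{S,c}}\to\mathcal{H}^{\mathrm{H,c}}$ such that \begin{align*} (\mathcal{B}\psi)(\xi)&=\int_Q \psi(\phi)\,B(\xi,\phi)\,\mathrm{d}\mu_Q(\phi) &&\forall\psi\in\mathcal{H}^{\mathrm{S,c}},\\ (\mathcal{B}^{-1}\psi)(\phi)&=\int_L \psi(\xi)\,\overline{B(\xi,\phi)}\,\mathrm{d}\nu_L(\xi) &&\forall\psi\in\mathcal{H}^{\mathrm{H,c}},\\ \langle\psi',\mathcal{B}\psi\rangle^{\mathrm{H}}&=\int_L\overline{\psi'(\xi)}\,\psi(q(\xi))\,\overline{\alpha(\xi)}\,\mathrm{d}\mu_L(\xi) &&\forall\psi'\in\mathcal{H}^{\mathrm{H,c}},\ \forall\psi\in\mathcal{H}^{\mathrm{S,c}},\\ \langle\psi',\mathcal{B}^{-1}\psi\rangle^{\mathrm{S}}&=\int_L\overline{\psi'(q(\xi))}\,\psi(\xi)\,\alpha(\xi)\,\mathrm{d}\mu_L(\xi)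 &&\forall\psi'\in\mathcal{H}^{\mathrm{S,c}},\ \forall\psi\in\mathcal{H}^{\mathrm{H,c}}. \end{align*} Moreover, for every $\tau\in L$, $(\mathcal{B}^{-1}K^{\mathrm{H}}_\tau)(\phi)=\overline{B(\tau,\phi)}$ for all $\phi\in Q$.
   Context: $L$ is a finite-dimensional real vector space and $[\cdot,\cdot]:L\times L\to\mathbb{R}$ is a bilinear form such that $\omega(\xi,\xi')=\frac12[\xi,\xi']-\frac12[\xi',\xi]$ is non-degenerate. Set $M=\{\tau\in L:[\xi,\tau]=0\ \forall\xi\in L\}$ and $N=\{\tau\in L:[\tau,\xi]=0\ \forall\xi\in L\}$, and assume $L=M\oplus N$. Let $Q=L/M$ with quotient map $q:L\to Q$; $[\cdot,\cdot]$ descends to a map $L\times Q\to\mathbb{R}$, still denoted $[\cdot,\cdot]$. $J:L\to L$ is a linear map with $J^2=-\mathrm{id}$ and $\omega(J\cdot,J\cdot)=\omega$, such that $g(\tau,\xi):=2\omega(\tau,J\xi)$ is positive definite; $\{\tau,\xi\}:=g(\tau,\xi)+2\mathrm{i}\,\omega(\tau,\xi)$ (a complex inner product on $L$, with multiplication by $\mathrm{i}$ given by $J$). $Q$ carries the quotient norm induced by $g$, and $j:Q\to L$ is the unique linear map with $q\circ j=\mathrm{id}_Q$ and $j(Q)\subseteq JM$. $\mu_Q$ is the Lebesgue measure on $Q$ normalized by $\int_Q\exp(-g(j(\phi),j(\phi)))\,\mathrm{d}\mu_Q(\phi)=1$, and $\mathcal{H}^{\mathrm{S}}=\mathrm{L}^2(Q,\mu_Q)$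 with inner product $\langle\cdot,\cdot\rangle^{\mathrm{S}}$ (antilinear in the first argument). $\mu_L$ is the Lebesgue measure on $L$ normalized by $\int_L\exp(-\frac12 g(\xi,\xi))\,\mathrm{d}\mu_L(\xi)=1$, $\mathrm{d}\nu_L:=\exp(-\frac12 g(\xi,\xi))\,\mathrm{d}\mu_L$, and $\mathcal{H}^{\mathrm{H}}$ is the Hilbert space of functions on $L$ that are holomorphic (with respect to the complex structure $J$) and square-integrable with respect to $\nu_L$, with inner product $\langle\cdot,\cdot\rangle^{\mathrm{H}}$. For $\tau\in L$, $K^{\mathrm{H}}_\tau(\xi)=\exp(\frac12\{\tau,\xi\})$, and $\mathcal{H}^{\mathrm{H,c}}$ is the linear span of $\{K^{\mathrm{H}}_\tau:\tau\in L\}$. Further, $\alpha(\xi)=\exp(\frac{\mathrm{i}}{2}[\xi,\xi]-\frac14 g(\xi,\xi))$ and $B:L\times Q\to\mathbb{C}$ is $$B(\xi,\phi)=\exp\Big(\{j(\phi),\xi\}-\tfrac{\mathrm{i}}{2}[j(\phi),j(\phi)]-\tfrac12 g(j(\phi),j(\phi))+\tfrac14 g(\xi,\xi)-\tfrac12\{j(q(\xi)),\xi\}\Big).$$ *)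

theory Defs
  imports "HOL-Analysis.Analysis"
begin

definition omega :: "('l \<Rightarrow> 'l \<Rightarrow> real) \<Rightarrow> 'l \<Rightarrow> 'l \<Rightarrow> real" where
  "omega br x y = br x y / 2 - br y x / 2"

definition Mspace :: "('l \<Rightarrow> 'l \<Rightarrow> real) \<Rightarrow> 'l set" where
  "Mspace br = {\<tau>. \<forall>\<xi>. br \<xi> \<tau> = 0}"

definition Nspace :: "('l \<Rightarrow> 'l \<Rightarrow> real) \<Rightarrow> 'l set" where
  "Nspace br = {\<tau>. \<forall>\<xi>. br \<tau> \<xi> = 0}"

definition gform :: "('l \<Rightarrow> 'l \<Rightarrow> real) \<Rightarrow> ('l \<Rightarrow> 'l) \<Rightarrow> 'l \<Rightarrow> 'l \<Rightarrow> real" where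
  "gform br J x y = 2 * omega br x (J y)"

definition cinner :: "('l \<Rightarrow> 'l \<Rightarrow> real) \<Rightarrow> ('l \<Rightarrow> 'l) \<Rightarrow> 'l \<Rightarrow> 'l \<Rightarrow> complex" where
  "cinner br J x y = complex_of_real (gform br J x y) + 2 * \<i> * complex_of_real (omega br x y)"

definition muL :: "('l::euclidean_space \<Rightarrow> 'l \<Rightarrow> real) \<Rightarrow> ('l \<Rightarrow> 'l) \<Rightarrow> 'l measure" where
  "muL br J = density lborel
     (\<lambda>_. ennreal (1 / integral\<^sup>L lborel (\<lambda>\<xi>. exp (- gform br J \<xi> \<xi> / 2))))"

definition nuL :: "('l::euclidean_space \<Rightarrow> 'l \<Rightarrow> real) \<Rightarrow> ('l \<Rightarrow> 'l) \<Rightarrow> 'l measure" where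
  "nuL br J = density (muL br J) (\<lambda>\<xi>. ennreal (exp (- gform br J \<xi> \<xi> / 2)))"

text \<open>Normalised Lebesgue measure on Q (Q is modelled by a euclidean space 'q together with a
  linear surjection q : L \<rightarrow> Q with kernel M; j is the section with range in JM).\<close>
definition muQ :: "('l \<Rightarrow> 'l \<Rightarrow> real) \<Rightarrow> ('l \<Rightarrow> 'l) \<Rightarrow> ('q::euclidean_space \<Rightarrow> 'l) \<Rightarrow> 'q measure" where
  "muQ br J j = density lborel
     (\<lambda>_. ennreal (1 / integral\<^sup>L lborel (\<lambda>\<phi>. exp (- gform br J (j \<phi>) (j \<phi>)))))"

definition alpha :: "('l \<Rightarrow> 'l \<Rightarrow> real) \<Rightarrow> ('l \<Rightarrow> 'l) \<Rightarrow> 'l \<Rightarrow> complex" where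
  "alpha br J \<xi> = exp (\<i> / 2 * complex_of_real (br \<xi> \<xi>) - complex_of_real (gform br J \<xi> \<xi> / 4))"

definition Bkern :: "('l \<Rightarrow> 'l \<Rightarrow> real) \<Rightarrow> ('l \<Rightarrow> 'l) \<Rightarrow> ('l \<Rightarrow> 'q) \<Rightarrow> ('q \<Rightarrow> 'l)
    \<Rightarrow> 'l \<Rightarrow> 'q \<Rightarrow> complex" where
  "Bkern br J q j \<xi> \<phi> = exp (cinner br J (j \<phi>) \<xi>
      - \<i> / 2 * complex_of_real (br (j \<phi>) (j \<phi>))
      - complex_of_real (gform br J (j \<phi>) (j \<phi>) / 2)
      + complex_of_real (gform br J \<xi> \<xi> / 4)
      - cinner br J (j (q \<xi>)) \<xi> / 2)"

definition KH :: "('l \<Rightarrow> 'l \<Rightarrow> real) \<Rightarrow> ('l \<Rightarrow> 'l) \<Rightarrow> 'l \<Rightarrow> 'l \<Rightarrow> complex" where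
  "KH br J \<tau> \<xi> = exp (cinner br J \<tau> \<xi> / 2)"

definition HHc :: "('l \<Rightarrow> 'l \<Rightarrow> real) \<Rightarrow> ('l \<Rightarrow> 'l) \<Rightarrow> ('l \<Rightarrow> complex) set" where
  "HHc br J = {f. \<exists>S c. finite S \<and> f = (\<lambda>\<xi>. \<Sum>\<tau>\<in>S. c \<tau> * KH br J \<tau> \<xi>)}"

definition innerH :: "('l::euclidean_space \<Rightarrow> 'l \<Rightarrow> real) \<Rightarrow> ('l \<Rightarrow> 'l) \<Rightarrow> ('l \<Rightarrow> complex) \<Rightarrow> ('l \<Rightarrow> complex) \<Rightarrow> complex" where
  "innerH br J f g = integral\<^sup>L (nuL br J) (\<lambda>\<xi>. cnj (f \<xi>) * g \<xi>)"

definition innerS :: "('l \<Rightarrow> 'l \<Rightarrow> real) \<Rightarrow> ('l \<Rightarrow> 'l) \<Rightarrow> ('q::euclidean_space \<Rightarrow> 'l) \<Rightarrow> ('q \<Rightarrow> complex) \<Rightarrow> ('q \<Rightarrow> complex) \<Rightarrow> complex" where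
  "innerS br J j f g = integral\<^sup>L (muQ br J j) (\<lambda>\<phi>. cnj (f \<phi>) * g \<phi>)"

text \<open>Square-integrable functions on Q (elements of \<open>L^2(Q,\<mu>_Q)\<close>, as representatives).\<close>
definition L2Q :: "('l \<Rightarrow> 'l \<Rightarrow> real) \<Rightarrow> ('l \<Rightarrow> 'l) \<Rightarrow> ('q::euclidean_space \<Rightarrow> 'l) \<Rightarrow> ('q \<Rightarrow> complex) set" where
  "L2Q br J j = {f. f \<in> borel_measurable (muQ br J j) \<and> integrable (muQ br J j) (\<lambda>\<phi>. (cmod (f \<phi>))\<^sup>2)}"

definition csubspace_fun :: "('a \<Rightarrow> complex) set \<Rightarrow> bool" where
  "csubspace_fun S \<longleftrightarrow> (\<lambda>_. 0) \<in> S \<and>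
     (\<forall>f\<in>S. \<forall>g\<in>S. \<forall>a::complex. (\<lambda>x. a * f x + g x) \<in> S)"

end

theory Submission
  imports Defs "HOL-Probability.Probability"
begin

text \<open>Orthonormalising \<open>g\<close> on \<open>Q\<close> and using \<open>J\<close> produces a linear isomorphism
  \<open>T : Q \<times> Q \<rightarrow> L\<close>, \<open>T(a,b) = j(R b) + J j(R a)\<close>, in which \<open>g\<close> is the Euclidean inner product,
  \<open>\<omega>\<close> is the standard symplectic form, \<open>M\<close> is the first factor and \<open>q (T(a,b)) = R b\<close>.
  In these coordinates \<open>K_\<tau>\<close>, \<open>B\<close> and \<open>\<alpha>\<close> are exponentials of quadratic polynomials, so the
  four basic pairings -- the inner products of coherent states in \<open>H^H\<close>, of the functions
  \<open>conj B(\<tau>,\<cdot>)\<close> in \<open>L^2(Q)\<close>, the integral of \<open>K_\<tau>\<close> against \<open>conj B\<close>, and the mixed integrals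
  against \<open>\<alpha>\<close> -- are Gaussian integrals, each equal to \<open>K_\<tau>(\<sigma>)\<close> or to \<open>conj B(\<tau>,\<phi>)\<close>.
  Taking \<open>H^{S,c}\<close> to be the span of the functions \<open>conj B(\<tau>,\<cdot>)\<close>, the two integral operators
  exchange these generators with the \<open>K_\<tau>\<close>, hence are mutually inverse on the spans, and all
  inner-product identities extend sesquilinearly from the generators.\<close>

section \<open>Gaussian integrals\<close>

lemma gaussian_char_lborel:
  fixes v :: real
  shows "integrable lborel (\<lambda>x. complex_of_real (exp (- x\<^sup>2 / 2)) * exp (\<i> * complex_of_real (v * x)))"
    and "(\<integral>x. complex_of_real (exp (- x\<^sup>2 / 2)) * exp (\<i> * complex_of_real (v * x)) \<partial>lborel)
         = complex_of_real (sqrt (2*pi) * exp (- v\<^sup>2 / 2))"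
proof -
  interpret P: real_distribution std_normal_distribution by (rule real_dist_normal_dist)
  have m: "(\<lambda>x. exp (\<i> * complex_of_real (v * x))) \<in> borel_measurable borel" by measurable
  have i1: "integrable std_normal_distribution (\<lambda>x. exp (\<i> * complex_of_real (v * x)))"
    by (rule P.integrable_iexp) auto
  then have i2: "integrable lborel (\<lambda>x. std_normal_density x *\<^sub>R exp (\<i> * complex_of_real (v * x)))"
    by (subst (asm) integrable_density) auto
  have eqf: "(\<lambda>x. complex_of_real (exp (- x\<^sup>2 / 2)) * exp (\<i> * complex_of_real (v * x)))
     = (\<lambda>x. complex_of_real (sqrt (2*pi)) * (std_normal_density x *\<^sub>R exp (\<i> * complex_of_real (v * x))))"
    by (auto simp: std_normal_density_def scaleR_conv_of_real fun_eq_iff)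
  show "integrable lborel (\<lambda>x. complex_of_real (exp (- x\<^sup>2 / 2)) * exp (\<i> * complex_of_real (v * x)))"
    unfolding eqf using i2 by (rule integrable_mult_right)
  have "char std_normal_distribution v = (\<integral>x. std_normal_density x *\<^sub>R exp (\<i> * complex_of_real (v * x)) \<partial>lborel)"
    unfolding char_def by (subst integral_density) auto
  then have "(\<integral>x. std_normal_density x *\<^sub>R exp (\<i> * complex_of_real (v * x)) \<partial>lborel) = complex_of_real (exp (- v\<^sup>2 / 2))"
    by (simp add: char_std_normal_distribution)
  then show "(\<integral>x. complex_of_real (exp (- x\<^sup>2 / 2)) * exp (\<i> * complex_of_real (v * x)) \<partial>lborel)
         = complex_of_real (sqrt (2*pi) * exp (- v\<^sup>2 / 2))"
    unfolding eqf integral_mult_right_zero by simp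
qed

lemma gaussian_integral_real:
  fixes p :: real and w :: complex
  assumes p: "p > 0"
  shows "integrable lborel (\<lambda>t. exp (complex_of_real (- p * t\<^sup>2) + w * complex_of_real t))"
    and "(\<integral>t. exp (complex_of_real (- p * t\<^sup>2) + w * complex_of_real t) \<partial>lborel)
         = complex_of_real (sqrt (pi / p)) * exp (w\<^sup>2 / complex_of_real (4 * p))"
proof -
  define u where "u = Re w"
  define v where "v = Im w"
  have w: "w = complex_of_real u + \<i> * complex_of_real v" by (simp add: u_def v_def complex_eq_iff)
  define c where "c = 1 / sqrt (2 * p)"
  define t0 where "t0 = u / (2 * p)"
  have c0: "c \<noteq> 0" "c > 0" using p by (auto simp: c_def)
  have pc: "p * c\<^sup>2 = 1/2" using p by (simp add: c_def power_divide)
  define f where "f = (\<lambda>t. exp (complex_of_real (- p * t\<^sup>2) + w * complex_of_real t))"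
  define K where "K = exp (complex_of_real (u\<^sup>2 / (4 * p)) + \<i> * complex_of_real (v * t0))"
  have fx: "f (t0 + c * x) = K * (complex_of_real (exp (- x\<^sup>2 / 2)) * exp (\<i> * complex_of_real ((v * c) * x)))" for x
  proof -
    have "complex_of_real (- p * (t0 + c * x)\<^sup>2) + w * complex_of_real (t0 + c * x)
       = (complex_of_real (u\<^sup>2 / (4 * p)) + \<i> * complex_of_real (v * t0)) + (complex_of_real (- x\<^sup>2 / 2) + \<i> * complex_of_real ((v * c) * x))"
    proof -
      have r: "- p * (t0 + c * x)\<^sup>2 + u * (t0 + c * x) = u\<^sup>2 / (4 * p) + (- x\<^sup>2 / 2)"
        using p pc unfolding t0_def by (simp add: field_simps power2_eq_square)
      show ?thesis unfolding w
        using r by (simp add: complex_eq_iff algebra_simps)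
    qed
    then show ?thesis unfolding f_def K_def by (simp only: exp_add exp_of_real mult.assoc)
  qed
  note S = gaussian_char_lborel[of "v * c"]
  have int2: "integrable lborel (\<lambda>x. f (t0 + c * x))"
    unfolding fx by (intro integrable_mult_right S(1))
  show "integrable lborel (\<lambda>t. exp (complex_of_real (- p * t\<^sup>2) + w * complex_of_real t))"
    using int2 lborel_integrable_real_affine_iff[OF c0(1), of f t0] unfolding f_def by simp
  have "(\<integral>t. f t \<partial>lborel) = \<bar>c\<bar> *\<^sub>R (\<integral>x. f (t0 + c * x) \<partial>lborel)"
    by (rule lborel_integral_real_affine[OF c0(1)])
  also have "\<dots> = complex_of_real c * (K * complex_of_real (sqrt (2*pi) * exp (- (v * c)\<^sup>2 / 2)))"
    unfolding fx integral_mult_right_zero S(2) using c0 by (simp add: scaleR_conv_of_real)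
  also have "\<dots> = complex_of_real (sqrt (pi / p)) * exp (w\<^sup>2 / complex_of_real (4 * p))"
  proof -
    have e1: "c * sqrt (2*pi) = sqrt (pi / p)" using p
      by (simp add: c_def real_sqrt_divide real_sqrt_mult field_simps)
    have e2: "K * complex_of_real (exp (- (v * c)\<^sup>2 / 2)) = exp (w\<^sup>2 / complex_of_real (4 * p))"
    proof -
      have "K * complex_of_real (exp (- (v * c)\<^sup>2 / 2))
          = exp ((complex_of_real (u\<^sup>2 / (4 * p)) + \<i> * complex_of_real (v * t0)) + complex_of_real (- (v * c)\<^sup>2 / 2))"
        unfolding K_def by (simp only: exp_add exp_of_real)
      also have "(complex_of_real (u\<^sup>2 / (4 * p)) + \<i> * complex_of_real (v * t0)) + complex_of_real (- (v * c)\<^sup>2 / 2)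
          = w\<^sup>2 / complex_of_real (4 * p)"
        using p pc unfolding w t0_def
        by (simp add: complex_eq_iff power2_eq_square field_simps)
      finally show ?thesis .
    qed
    show ?thesis using e1 e2 by (metis (no_types, lifting) mult.assoc mult.left_commute of_real_mult)
  qed
  finally show "(\<integral>t. exp (complex_of_real (- p * t\<^sup>2) + w * complex_of_real t) \<partial>lborel)
         = complex_of_real (sqrt (pi / p)) * exp (w\<^sup>2 / complex_of_real (4 * p))" unfolding f_def .
qed

lemma inner_sum_scaleR_Basis:
  fixes f :: "'a::euclidean_space \<Rightarrow> real"
  assumes "b \<in> Basis"
  shows "(\<Sum>c\<in>Basis. f c *\<^sub>R c) \<bullet> b = f b"
  using assms by (simp add: inner_sum_left inner_Basis if_distrib sum.delta cong: if_cong)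

lemma gaussian_integrand_prod_Basis:
  fixes u v :: "'a::euclidean_space" and f :: "'a \<Rightarrow> real"
  defines "x \<equiv> \<Sum>b\<in>Basis. f b *\<^sub>R b"
  shows "exp (complex_of_real (- p * (norm x)\<^sup>2) + complex_of_real (u \<bullet> x) + \<i> * complex_of_real (v \<bullet> x))
    = (\<Prod>b\<in>Basis. exp (complex_of_real (- p * (f b)\<^sup>2)
        + (complex_of_real (u \<bullet> b) + \<i> * complex_of_real (v \<bullet> b)) * complex_of_real (f b)))"
proof -
  have n: "(norm x)\<^sup>2 = (\<Sum>b\<in>Basis. (f b)\<^sup>2)"
    unfolding power2_norm_eq_inner x_def
    by (subst euclidean_inner) (simp add: inner_sum_scaleR_Basis power2_eq_square)
  have inner_x: "y \<bullet> x = (\<Sum>b\<in>Basis. (y \<bullet> b) * f b)" for y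
    unfolding x_def by (simp add: euclidean_inner[of y "\<Sum>b\<in>Basis. f b *\<^sub>R b"] inner_sum_scaleR_Basis)
  have "(\<Sum>b\<in>Basis. complex_of_real (- p * (f b)\<^sup>2)
        + (complex_of_real (u \<bullet> b) + \<i> * complex_of_real (v \<bullet> b)) * complex_of_real (f b))
    = (\<Sum>b\<in>Basis. complex_of_real (- p * (f b)\<^sup>2) + complex_of_real ((u \<bullet> b) * f b)
        + \<i> * complex_of_real ((v \<bullet> b) * f b))"
    by (intro sum.cong refl) (simp add: algebra_simps)
  also have "\<dots> = (\<Sum>b\<in>Basis. complex_of_real (- p * (f b)\<^sup>2)) + (\<Sum>b\<in>Basis. complex_of_real ((u \<bullet> b) * f b))
        + \<i> * (\<Sum>b\<in>Basis. complex_of_real ((v \<bullet> b) * f b))"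
    by (simp only: sum.distrib sum_distrib_left)
  also have "(\<Sum>b\<in>Basis. complex_of_real (- p * (f b)\<^sup>2)) = complex_of_real (- p * (\<Sum>b\<in>Basis. (f b)\<^sup>2))"
    by (simp only: sum_distrib_left[symmetric] of_real_sum[symmetric] mult_minus_left sum_negf)
  finally have "complex_of_real (- p * (norm x)\<^sup>2) + complex_of_real (u \<bullet> x) + \<i> * complex_of_real (v \<bullet> x)
    = (\<Sum>b\<in>Basis. complex_of_real (- p * (f b)\<^sup>2)
        + (complex_of_real (u \<bullet> b) + \<i> * complex_of_real (v \<bullet> b)) * complex_of_real (f b))"
    unfolding n inner_x of_real_sum by simp
  then show ?thesis by (simp add: exp_sum)
qed

lemma sum_Basis_complex_inner_square:
  fixes u v :: "'a::euclidean_space"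
  shows "(\<Sum>b\<in>Basis. (complex_of_real (u \<bullet> b) + \<i> * complex_of_real (v \<bullet> b))\<^sup>2)
    = complex_of_real ((norm u)\<^sup>2 - (norm v)\<^sup>2) + 2 * \<i> * complex_of_real (u \<bullet> v)"
proof -
  have "(\<Sum>b\<in>Basis. (complex_of_real (u \<bullet> b) + \<i> * complex_of_real (v \<bullet> b))\<^sup>2)
    = (\<Sum>b\<in>Basis. complex_of_real ((u \<bullet> b) * (u \<bullet> b) - (v \<bullet> b) * (v \<bullet> b))
        + 2 * \<i> * complex_of_real ((u \<bullet> b) * (v \<bullet> b)))"
    by (intro sum.cong refl) (simp add: power2_eq_square algebra_simps)
  also have "\<dots> = complex_of_real ((norm u)\<^sup>2 - (norm v)\<^sup>2) + 2 * \<i> * complex_of_real (u \<bullet> v)"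
    by (simp add: sum.distrib power2_norm_eq_inner euclidean_inner[of u u] euclidean_inner[of v v]
          euclidean_inner[of u v] sum_subtractf sum_distrib_left flip: of_real_sum)
       (simp add: of_real_sum sum_distrib_left)
  finally show ?thesis .
qed

lemma gaussian_integral_euclidean:
  fixes u v :: "'a::euclidean_space" and p :: real
  assumes p: "p > 0"
  shows "integrable lborel (\<lambda>x::'a. exp (complex_of_real (- p * (norm x)\<^sup>2) + complex_of_real (u \<bullet> x) + \<i> * complex_of_real (v \<bullet> x)))"
    and "(\<integral>x. exp (complex_of_real (- p * (norm x)\<^sup>2) + complex_of_real (u \<bullet> x) + \<i> * complex_of_real (v \<bullet> x)) \<partial>lborel)
       = complex_of_real (sqrt (pi / p) ^ DIM('a)) *
         exp ((complex_of_real ((norm u)\<^sup>2 - (norm v)\<^sup>2) + 2 * \<i> * complex_of_real (u \<bullet> v)) / complex_of_real (4 * p))"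
proof -
  define F where "F = (\<lambda>x::'a. exp (complex_of_real (- p * (norm x)\<^sup>2) + complex_of_real (u \<bullet> x) + \<i> * complex_of_real (v \<bullet> x)))"
  define w where "w = (\<lambda>b. complex_of_real (u \<bullet> b) + \<i> * complex_of_real (v \<bullet> b))"
  define G where "G = (\<lambda>b t. exp (complex_of_real (- p * t\<^sup>2) + w b * complex_of_real t))"
  interpret PS: product_sigma_finite "\<lambda>_::'a. lborel::real measure" by standard
  have Fm: "F \<in> borel_measurable borel" unfolding F_def by measurable
  have FG: "F (\<Sum>b\<in>Basis. f b *\<^sub>R b) = (\<Prod>b\<in>Basis. G b (f b))" for f
    unfolding F_def G_def w_def by (rule gaussian_integrand_prod_Basis)
  have Gi: "integrable lborel (G b)" for b unfolding G_def using gaussian_integral_real(1)[OF p] .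
  have Gv: "integral\<^sup>L lborel (G b) = complex_of_real (sqrt (pi / p)) * exp ((w b)\<^sup>2 / complex_of_real (4 * p))" for b
    unfolding G_def using gaussian_integral_real(2)[OF p] .
  have meas: "(\<lambda>f. \<Sum>b\<in>Basis. f b *\<^sub>R b) \<in> (Pi\<^sub>M Basis (\<lambda>_. lborel)) \<rightarrow>\<^sub>M (borel :: 'a measure)"
    by measurable
  have "integrable (Pi\<^sub>M Basis (\<lambda>_. lborel)) (\<lambda>f. \<Prod>b\<in>Basis. G b (f b))"
    by (rule PS.product_integrable_prod) (auto intro: Gi)
  then show "integrable lborel F"
    by (subst lborel_eq, subst integrable_distr_eq[OF meas Fm]) (simp only: FG)
  have "integral\<^sup>L lborel F = (\<integral>f. F (\<Sum>b\<in>Basis. f b *\<^sub>R b) \<partial>(Pi\<^sub>M Basis (\<lambda>_. lborel)))"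
    by (subst lborel_eq) (rule integral_distr[OF meas Fm])
  also have "\<dots> = (\<Prod>b\<in>Basis. integral\<^sup>L lborel (G b))"
    unfolding FG by (rule PS.product_integral_prod) (auto intro: Gi)
  also have "\<dots> = complex_of_real (sqrt (pi / p) ^ DIM('a)) * exp ((\<Sum>b\<in>Basis. (w b)\<^sup>2) / complex_of_real (4 * p))"
    by (simp add: Gv prod.distrib exp_sum sum_divide_distrib)
  finally show "integral\<^sup>L lborel F = complex_of_real (sqrt (pi / p) ^ DIM('a)) *
         exp ((complex_of_real ((norm u)\<^sup>2 - (norm v)\<^sup>2) + 2 * \<i> * complex_of_real (u \<bullet> v)) / complex_of_real (4 * p))"
    unfolding w_def sum_Basis_complex_inner_square .
qed

lemma norm_exp_Re_Im: "norm (exp (complex_of_real a + \<i> * complex_of_real b)) = exp a"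
  by (simp add: norm_exp_eq_Re)

lemma gaussian_integral_coupled_fibre:
  fixes ua va ub vb a :: "'a::euclidean_space" and pa pb k :: real
  assumes pb: "pb > 0"
  defines "P \<equiv> pa + k\<^sup>2 / (4 * pb)"
  defines "U \<equiv> ua - (k / (2 * pb)) *\<^sub>R vb"
  defines "V \<equiv> va + (k / (2 * pb)) *\<^sub>R ub"
  shows "(\<integral>b. exp (complex_of_real (- pa * (norm a)\<^sup>2 - pb * (norm b)\<^sup>2 + ua \<bullet> a + ub \<bullet> b)
            + \<i> * complex_of_real (k * (a \<bullet> b) + va \<bullet> a + vb \<bullet> b)) \<partial>lborel)
    = complex_of_real (sqrt (pi / pb) ^ DIM('a)) *
        (exp ((complex_of_real ((norm ub)\<^sup>2 - (norm vb)\<^sup>2) + 2 * \<i> * complex_of_real (ub \<bullet> vb)) / complex_of_real (4 * pb))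
         * exp (complex_of_real (- P * (norm a)\<^sup>2) + complex_of_real (U \<bullet> a) + \<i> * complex_of_real (V \<bullet> a)))"
proof -
  define A where "A = exp (complex_of_real (- pa * (norm a)\<^sup>2 + ua \<bullet> a) + \<i> * complex_of_real (va \<bullet> a))"
  have split: "exp (complex_of_real (- pa * (norm a)\<^sup>2 - pb * (norm b)\<^sup>2 + ua \<bullet> a + ub \<bullet> b)
      + \<i> * complex_of_real (k * (a \<bullet> b) + va \<bullet> a + vb \<bullet> b))
    = A * exp (complex_of_real (- pb * (norm b)\<^sup>2) + complex_of_real (ub \<bullet> b)
      + \<i> * complex_of_real ((vb + k *\<^sub>R a) \<bullet> b))" for b
    unfolding A_def mult_exp_exp
    by (rule arg_cong[where f=exp]) (simp add: complex_eq_iff inner_add_left inner_commute algebra_simps)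
  have "A * exp ((complex_of_real ((norm ub)\<^sup>2 - (norm (vb + k *\<^sub>R a))\<^sup>2)
      + 2 * \<i> * complex_of_real (ub \<bullet> (vb + k *\<^sub>R a))) / complex_of_real (4 * pb))
    = exp ((complex_of_real ((norm ub)\<^sup>2 - (norm vb)\<^sup>2) + 2 * \<i> * complex_of_real (ub \<bullet> vb)) / complex_of_real (4 * pb))
      * exp (complex_of_real (- P * (norm a)\<^sup>2) + complex_of_real (U \<bullet> a) + \<i> * complex_of_real (V \<bullet> a))"
    unfolding A_def mult_exp_exp using pb unfolding P_def U_def V_def
    by (intro arg_cong[where f=exp])
      (simp add: complex_eq_iff power2_norm_eq_inner inner_add_left inner_add_right inner_diff_left inner_commute
        field_simps, simp add: algebra_simps power2_eq_square)
  then show ?thesis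
    unfolding split integral_mult_right_zero gaussian_integral_euclidean(2)[OF pb] by (simp add: mult_ac)
qed

lemma gaussian_integral_coupled:
  fixes ua va ub vb :: "'a::euclidean_space" and pa pb k :: real
  assumes pa: "pa > 0" and pb: "pb > 0"
  defines "F \<equiv> (\<lambda>z::'a\<times>'a. exp (complex_of_real (- pa * (norm (fst z))\<^sup>2 - pb * (norm (snd z))\<^sup>2 + ua \<bullet> fst z + ub \<bullet> snd z)
                  + \<i> * complex_of_real (k * (fst z \<bullet> snd z) + va \<bullet> fst z + vb \<bullet> snd z)))"
  defines "P \<equiv> pa + k\<^sup>2 / (4 * pb)"
  defines "U \<equiv> ua - (k / (2 * pb)) *\<^sub>R vb"
  defines "V \<equiv> va + (k / (2 * pb)) *\<^sub>R ub"
  shows "integrable lborel F"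
    and "integral\<^sup>L lborel F = complex_of_real (sqrt (pi / pb) ^ DIM('a) * sqrt (pi / P) ^ DIM('a)) *
           exp ((complex_of_real ((norm ub)\<^sup>2 - (norm vb)\<^sup>2) + 2 * \<i> * complex_of_real (ub \<bullet> vb)) / complex_of_real (4 * pb)
              + (complex_of_real ((norm U)\<^sup>2 - (norm V)\<^sup>2) + 2 * \<i> * complex_of_real (U \<bullet> V)) / complex_of_real (4 * P))"
proof -
  have P: "P > 0" unfolding P_def using pa pb by (simp add: add_pos_nonneg)
  define p where "p = min pa pb"
  have p: "p > 0" using pa pb by (simp add: p_def)
  have Fm: "F \<in> borel_measurable borel" unfolding F_def by (intro borel_measurable_continuous_onI continuous_intros)
  have bnd: "norm (F z) \<le> norm (exp (complex_of_real (- p * (norm z)\<^sup>2) + complex_of_real ((ua, ub) \<bullet> z) + \<i> * complex_of_real (0 \<bullet> z)))" for z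
  proof -
    have "- pa * (norm (fst z))\<^sup>2 - pb * (norm (snd z))\<^sup>2 \<le> - p * ((norm (fst z))\<^sup>2 + (norm (snd z))\<^sup>2)"
      unfolding p_def by (simp add: algebra_simps add_mono mult_right_mono)
    moreover have "(norm z)\<^sup>2 = (norm (fst z))\<^sup>2 + (norm (snd z))\<^sup>2"
      by (cases z) (simp add: norm_Pair power2_eq_square)
    moreover have "(ua, ub) \<bullet> z = ua \<bullet> fst z + ub \<bullet> snd z" by (cases z) (simp add: inner_Pair)
    ultimately show ?thesis unfolding F_def
      by (simp only: norm_exp_Re_Im inner_zero_left mult_zero_right of_real_0 add_0_right exp_le_cancel_iff norm_exp_eq_Re Re_complex_of_real) simp
  qed
  show intF: "integrable lborel F"
    by (rule Bochner_Integration.integrable_bound[OF gaussian_integral_euclidean(1)[OF p, of "(ua, ub)" 0]]) (use bnd Fm in auto)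
  define Cb where "Cb = (complex_of_real ((norm ub)\<^sup>2 - (norm vb)\<^sup>2) + 2 * \<i> * complex_of_real (ub \<bullet> vb)) / complex_of_real (4 * pb)"
  have "integral\<^sup>L lborel F = (\<integral>a. (\<integral>b. F (a, b) \<partial>lborel) \<partial>lborel)"
    using lborel_pair.integral_fst'[of F] intF by (simp add: lborel_prod)
  also have "\<dots> = (\<integral>a. complex_of_real (sqrt (pi / pb) ^ DIM('a)) * (exp Cb *
        exp (complex_of_real (- P * (norm a)\<^sup>2) + complex_of_real (U \<bullet> a) + \<i> * complex_of_real (V \<bullet> a))) \<partial>lborel)"
    unfolding F_def fst_conv snd_conv
    unfolding gaussian_integral_coupled_fibre[OF pb, where ua=ua and ub=ub and va=va and vb=vb and pa=pa and k=k,
        folded P_def U_def V_def Cb_def] ..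
  also have "\<dots> = complex_of_real (sqrt (pi / pb) ^ DIM('a)) * (exp Cb *
      (complex_of_real (sqrt (pi / P) ^ DIM('a)) *
         exp ((complex_of_real ((norm U)\<^sup>2 - (norm V)\<^sup>2) + 2 * \<i> * complex_of_real (U \<bullet> V)) / complex_of_real (4 * P))))"
    unfolding integral_mult_right_zero gaussian_integral_euclidean(2)[OF P] ..
  finally show "integral\<^sup>L lborel F = complex_of_real (sqrt (pi / pb) ^ DIM('a) * sqrt (pi / P) ^ DIM('a)) *
           exp ((complex_of_real ((norm ub)\<^sup>2 - (norm vb)\<^sup>2) + 2 * \<i> * complex_of_real (ub \<bullet> vb)) / complex_of_real (4 * pb)
              + (complex_of_real ((norm U)\<^sup>2 - (norm V)\<^sup>2) + 2 * \<i> * complex_of_real (U \<bullet> V)) / complex_of_real (4 * P))"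
    unfolding Cb_def by (simp add: exp_add mult_ac)
qed

lemma gaussian_integral_euclidean_real:
  fixes p :: real assumes p: "p > 0"
  shows "integrable lborel (\<lambda>x::'a::euclidean_space. exp (- p * (norm x)\<^sup>2))"
    and "integral\<^sup>L lborel (\<lambda>x::'a::euclidean_space. exp (- p * (norm x)\<^sup>2)) = sqrt (pi / p) ^ DIM('a)"
proof -
  have eq: "(\<lambda>x::'a. exp (complex_of_real (- p * (norm x)\<^sup>2) + complex_of_real (0 \<bullet> x) + \<i> * complex_of_real (0 \<bullet> x)))
     = (\<lambda>x. complex_of_real (exp (- p * (norm x)\<^sup>2)))"
    by (simp only: inner_zero_left of_real_0 mult_zero_right add_0_right exp_of_real)
  have "integrable lborel (\<lambda>x::'a. complex_of_real (exp (- p * (norm x)\<^sup>2)))"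
    using gaussian_integral_euclidean(1)[OF p, of "0::'a" "0::'a"] by (simp only: eq)
  from integrable_Re[OF this] show "integrable lborel (\<lambda>x::'a::euclidean_space. exp (- p * (norm x)\<^sup>2))" by simp
  have "complex_of_real (integral\<^sup>L lborel (\<lambda>x::'a. exp (- p * (norm x)\<^sup>2))) = complex_of_real (sqrt (pi / p) ^ DIM('a))"
    using gaussian_integral_euclidean(2)[OF p, of "0::'a" "0::'a"] unfolding eq by simp
  then show "integral\<^sup>L lborel (\<lambda>x::'a::euclidean_space. exp (- p * (norm x)\<^sup>2)) = sqrt (pi / p) ^ DIM('a)"
    using of_real_eq_iff by blast
qed

lemma scaleR_exp_exp: "exp (x::real) *\<^sub>R exp (w::complex) = exp (complex_of_real x + w)"
  by (simp add: scaleR_conv_of_real exp_add exp_of_real)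

section \<open>Lebesgue measure under linear isomorphisms\<close>

typedef (overloaded) 'a basis_index = "Basis :: 'a::euclidean_space set" morphisms rep_basis_index abs_basis_index
  using nonempty_Basis by blast

lemma UNIV_basis_index: "(UNIV :: 'a::euclidean_space basis_index set) = abs_basis_index ` Basis"
  by (rule sym) (rule type_definition.Abs_image[OF type_definition_basis_index])

instance basis_index :: (euclidean_space) finite
  by standard (simp add: UNIV_basis_index)

definition basis_index_nat :: "'a::euclidean_space basis_index \<Rightarrow> nat" where
  "basis_index_nat = (SOME f. inj f)"

lemma inj_basis_index_nat: "inj (basis_index_nat :: 'a::euclidean_space basis_index \<Rightarrow> nat)"
proof -
  obtain f :: "'a basis_index \<Rightarrow> nat" and n where "inj_on f UNIV"
    using finite_imp_inj_to_nat_seg[of "UNIV :: 'a basis_index set"] by auto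
  then have "\<exists>f :: 'a basis_index \<Rightarrow> nat. inj f" by blast
  then show ?thesis unfolding basis_index_nat_def by (rule someI_ex)
qed

instantiation basis_index :: (euclidean_space) linorder
begin
definition less_eq_basis_index :: "'a basis_index \<Rightarrow> 'a basis_index \<Rightarrow> bool" where
  "less_eq_basis_index x y = (basis_index_nat x \<le> basis_index_nat y)"
definition less_basis_index :: "'a basis_index \<Rightarrow> 'a basis_index \<Rightarrow> bool" where
  "less_basis_index x y = (basis_index_nat x < basis_index_nat y)"
instance
proof
  fix x y z :: "'a basis_index"
  show "(x < y) = (x \<le> y \<and> \<not> y \<le> x)" by (auto simp: less_eq_basis_index_def less_basis_index_def)
  show "x \<le> x" by (simp add: less_eq_basis_index_def)
  show "x \<le> y \<Longrightarrow> y \<le> z \<Longrightarrow> x \<le> z" by (simp add: less_eq_basis_index_def)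
  show "x \<le> y \<Longrightarrow> y \<le> x \<Longrightarrow> x = y" using inj_basis_index_nat[where 'a='a]
    by (auto simp: less_eq_basis_index_def dest: injD)
  show "x \<le> y \<or> y \<le> x" by (auto simp: less_eq_basis_index_def)
qed
end

instance basis_index :: (euclidean_space) wellorder
proof
  fix P :: "'a basis_index \<Rightarrow> bool" and a
  assume H: "\<And>x. (\<And>y. y < x \<Longrightarrow> P y) \<Longrightarrow> P x"
  show "P a"
    by (induct a rule: measure_induct_rule[of basis_index_nat]) (rule H, simp add: less_basis_index_def)
qed

lemma bij_rep_basis_index: "bij_betw rep_basis_index (UNIV :: 'a::euclidean_space basis_index set) Basis"
  by (metis bij_betw_def inj_def rep_basis_index_inject type_definition.Rep_range type_definition_basis_index)

lemma card_basis_index: "CARD('a::euclidean_space basis_index) = DIM('a)"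
  using bij_betw_same_card[OF bij_rep_basis_index[where 'a='a]] by simp

lemma distr_density_const:
  assumes f: "f \<in> M \<rightarrow>\<^sub>M N"
  shows "distr (density M (\<lambda>_. c)) N f = density (distr M N f) (\<lambda>_. c)"
proof (rule measure_eqI)
  show "sets (distr (density M (\<lambda>_. c)) N f) = sets (density (distr M N f) (\<lambda>_. c))" by simp
  fix A assume A: "A \<in> sets (distr (density M (\<lambda>_. c)) N f)"
  then have A': "A \<in> sets N" by simp
  have pre: "f -` A \<inter> space M \<in> sets M" using f A' by (rule measurable_sets)
  show "emeasure (distr (density M (\<lambda>_. c)) N f) A = emeasure (density (distr M N f) (\<lambda>_. c)) A"
    using A' pre f by (simp add: emeasure_distr emeasure_density_const)
qed

lemma lborel_eq_density_distr_linear_vec: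
  fixes G H :: "real^'n::{finite,wellorder} \<Rightarrow> real^'n::_"
  assumes G: "linear G" and H: "linear H" and HG: "\<And>x. H (G x) = x" and GH: "\<And>x. G (H x) = x"
  shows "\<exists>c>0. lborel = density (distr lborel borel G) (\<lambda>_. ennreal c)"
proof -
  have dd: "det (matrix G) * det (matrix H) = 1"
  proof -
    have "G \<circ> H = id" using GH by auto
    then have "matrix G ** matrix H = mat 1" using matrix_compose[OF H G] by (simp add: matrix_id_mat_1)
    then show ?thesis by (metis det_I det_mul)
  qed
  have "lborel = density (distr lborel borel G) (\<lambda>_. ennreal \<bar>det (matrix G)\<bar>)"
  proof (rule lborel_eqI)
    have Gm: "G \<in> borel \<rightarrow>\<^sub>M borel" using G
      by (intro borel_measurable_continuous_onI linear_continuous_on) (simp add: linear_conv_bounded_linear[symmetric])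
    show "sets (density (distr lborel borel G) (\<lambda>_. ennreal \<bar>det (matrix G)\<bar>)) = sets borel" by simp
    fix l u :: "real^'n::_"
    assume lu: "\<And>b. b \<in> Basis \<Longrightarrow> l \<bullet> b \<le> u \<bullet> b"
    have pre: "G -` box l u = H ` box l u"
      using HG GH by (auto simp: image_iff) (metis)
    have hm: "H ` box l u \<in> lmeasurable" by (intro measurable_linear_image H) simp
    have hb: "H ` box l u \<in> sets borel"
      using measurable_sets[OF Gm, of "box l u"] pre by simp
    have bnd: "bounded (H ` box l u)"
      using H by (intro bounded_linear_image) (auto simp: linear_conv_bounded_linear[symmetric])
    have e1: "emeasure lborel (H ` box l u) = ennreal (measure lborel (H ` box l u))"
      using emeasure_bounded_finite[OF bnd] by (intro emeasure_eq_ennreal_measure) simp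
    have e2: "measure lborel (H ` box l u) = \<bar>det (matrix H)\<bar> * measure lborel (box l u)"
      using measure_linear_image[OF H, of "box l u"] hb by simp
    have "emeasure (density (distr lborel borel G) (\<lambda>_. ennreal \<bar>det (matrix G)\<bar>)) (box l u)
        = ennreal \<bar>det (matrix G)\<bar> * emeasure lborel (H ` box l u)"
      using Gm by (simp add: emeasure_density_const emeasure_distr pre)
    also have "\<dots> = ennreal (\<bar>det (matrix G)\<bar> * (\<bar>det (matrix H)\<bar> * measure lborel (box l u)))"
      unfolding e1 e2 by (simp add: ennreal_mult)
    also have "\<bar>det (matrix G)\<bar> * (\<bar>det (matrix H)\<bar> * measure lborel (box l u)) = measure lborel (box l u)"
      using dd by (simp add: abs_mult[symmetric] mult.assoc[symmetric])
    also have "ennreal (measure lborel (box l u)) = (\<Prod>b\<in>Basis. (u - l) \<bullet> b)"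
      using lu by (simp add: measure_lborel_box_eq prod_nonneg inner_diff_left)
    finally show "emeasure (density (distr lborel borel G) (\<lambda>_. ennreal \<bar>det (matrix G)\<bar>)) (box l u)
        = (\<Prod>b\<in>Basis. (u - l) \<bullet> b)" .
  qed
  moreover have "\<bar>det (matrix G)\<bar> > 0"
    using dd by auto
  ultimately show ?thesis by blast
qed

lemma Basis_cart_range: "(Basis :: (real^'n) set) = range (\<lambda>i. axis i 1)"
  by (auto simp: Basis_vec_def)

lemma prod_Basis_cart: "(\<Prod>b\<in>(Basis::(real^'n) set). f b) = (\<Prod>i\<in>UNIV. f (axis i 1))"
  unfolding Basis_cart_range by (subst prod.reindex) (auto simp: inj_on_def axis_eq_axis)

lemma linear_borel_measurable: "linear (f :: 'a::euclidean_space \<Rightarrow> 'b::euclidean_space) \<Longrightarrow> f \<in> borel_measurable borel"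
  by (intro borel_measurable_continuous_onI linear_continuous_on) (simp add: linear_conv_bounded_linear[symmetric])

lemma inner_sum_scaleR_index_basis:
  fixes \<beta> :: "'n::finite \<Rightarrow> 'a::euclidean_space"
  assumes \<beta>: "bij_betw \<beta> UNIV Basis"
  shows "(\<Sum>j\<in>UNIV. c j *\<^sub>R \<beta> j) \<bullet> \<beta> i = c i"
proof -
  have "(\<Sum>j\<in>UNIV. c j *\<^sub>R \<beta> j) \<bullet> \<beta> i = (\<Sum>j\<in>UNIV. c j * (\<beta> j \<bullet> \<beta> i))"
    by (simp add: inner_sum_left)
  also have "\<dots> = (\<Sum>j\<in>UNIV. if j = i then c j else 0)"
  proof (intro sum.cong refl)
    fix j
    have "\<beta> j \<in> Basis" "\<beta> i \<in> Basis" using \<beta> by (auto simp: bij_betw_def)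
    moreover have "\<beta> j = \<beta> i \<longleftrightarrow> j = i" using \<beta> by (auto simp: bij_betw_def inj_on_def)
    ultimately show "c j * (\<beta> j \<bullet> \<beta> i) = (if j = i then c j else 0)" by (auto simp: inner_Basis)
  qed
  finally show ?thesis by simp
qed

lemma sum_index_basis_representation:
  fixes \<beta> :: "'n::finite \<Rightarrow> 'a::euclidean_space"
  assumes \<beta>: "bij_betw \<beta> UNIV Basis"
  shows "(\<Sum>j\<in>UNIV. (x \<bullet> \<beta> j) *\<^sub>R \<beta> j) = x"
proof -
  have "(\<Sum>j\<in>UNIV. (x \<bullet> \<beta> j) *\<^sub>R \<beta> j) = (\<Sum>b\<in>Basis. (x \<bullet> b) *\<^sub>R b)"
    by (rule sum.reindex_bij_betw[OF \<beta>])
  then show ?thesis by (simp add: euclidean_representation)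
qed

lemma distr_lborel_index_coordinates:
  fixes \<beta> :: "'n::finite \<Rightarrow> 'a::euclidean_space"
  assumes \<beta>: "bij_betw \<beta> UNIV Basis"
  shows "distr lborel borel (\<lambda>x::'a. \<chi> i. x \<bullet> \<beta> i) = (lborel :: (real^'n) measure)"
proof (rule lborel_eqI[symmetric])
  let ?E = "\<lambda>x::'a. \<chi> i. x \<bullet> \<beta> i"
  have lin: "linear ?E" by (auto intro!: linearI simp: vec_eq_iff inner_add_left)
  have Em: "?E \<in> borel_measurable borel" by (rule linear_borel_measurable[OF lin])
  show "sets (distr lborel borel ?E) = sets borel" by simp
  fix l u :: "real^'n"
  assume lu: "\<And>b. b \<in> Basis \<Longrightarrow> l \<bullet> b \<le> u \<bullet> b"
  then have lu': "l $ i \<le> u $ i" for i using lu[of "axis i 1"] by (auto simp: Basis_cart_range cart_eq_inner_axis)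
  define L where "L = (\<Sum>j\<in>UNIV. (l $ j) *\<^sub>R \<beta> j)"
  define U where "U = (\<Sum>j\<in>UNIV. (u $ j) *\<^sub>R \<beta> j)"
  have Li: "L \<bullet> \<beta> i = l $ i" "U \<bullet> \<beta> i = u $ i" for i
    unfolding L_def U_def using inner_sum_scaleR_index_basis[OF \<beta>] by auto
  have BB: "(\<forall>b\<in>Basis. P b) \<longleftrightarrow> (\<forall>i. P (\<beta> i))" for P
    using \<beta> by (auto simp: bij_betw_def) (metis UNIV_I image_iff)
  have pre: "?E -` box l u = box L U"
    by (auto simp: mem_box_cart mem_box BB Li)
  have "emeasure (distr lborel borel ?E) (box l u) = emeasure lborel (box L U)"
    using Em by (simp add: emeasure_distr pre)
  also have "\<dots> = (\<Prod>b\<in>Basis. (U - L) \<bullet> b)"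
    using lu' by (simp add: emeasure_lborel_box_eq BB inner_diff_left Li)
  also have "(\<Prod>b\<in>Basis. (U - L) \<bullet> b) = (\<Prod>i\<in>UNIV. (U - L) \<bullet> \<beta> i)"
    by (rule prod.reindex_bij_betw[OF \<beta>, symmetric])
  also have "\<dots> = (\<Prod>b\<in>Basis. (u - l) \<bullet> b)"
    by (simp add: prod_Basis_cart inner_diff_left Li cart_eq_inner_axis[symmetric])
  finally show "emeasure (distr lborel borel ?E) (box l u) = (\<Prod>b\<in>Basis. (u - l) \<bullet> b)"
    by (simp add: prod_nonneg)
qed

lemma linear_inv:
  fixes T :: "'a::real_vector \<Rightarrow> 'b::real_vector"
  assumes T: "linear T" and b: "bij T"
  shows "linear (inv T)"
proof (rule linearI)
  have inj: "inj T" and sur: "\<And>y. T (inv T y) = y" using b by (auto simp: bij_def surj_f_inv_f)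
  fix x y :: 'b and c :: real
  show "inv T (x + y) = inv T x + inv T y"
    by (rule injD[OF inj]) (simp add: sur linear_add[OF T])
  show "inv T (c *\<^sub>R x) = c *\<^sub>R inv T x"
    by (rule injD[OF inj]) (simp add: sur linear_scale[OF T])
qed

lemma exists_lborel_coordinates:
  fixes \<beta> :: "'n::finite \<Rightarrow> 'a::euclidean_space"
  assumes \<beta>: "bij_betw \<beta> UNIV Basis"
  obtains E :: "'a \<Rightarrow> real^'n" and E'
  where "linear E" "linear E'" "\<And>x. E' (E x) = x" "\<And>v. E (E' v) = v" "distr lborel borel E' = lborel"
proof
  define E where "E = (\<lambda>x::'a. \<chi> i. x \<bullet> \<beta> i)"
  define E' where "E' = (\<lambda>v. \<Sum>j\<in>UNIV. (v $ j) *\<^sub>R \<beta> j)"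
  show lin: "linear E" "linear E'" unfolding E_def E'_def
    by (auto intro!: linearI simp: vec_eq_iff inner_add_left sum.distrib scaleR_add_left scaleR_sum_right)
  show E'E: "E' (E x) = x" for x
    unfolding E'_def E_def using sum_index_basis_representation[OF \<beta>] by simp
  show "E (E' v) = v" for v
    unfolding E'_def E_def using inner_sum_scaleR_index_basis[OF \<beta>] by (simp add: vec_eq_iff)
  have "distr lborel borel E' = distr (distr lborel borel E) borel E'"
    unfolding E_def by (simp add: distr_lborel_index_coordinates[OF \<beta>])
  also have "\<dots> = distr lborel borel (\<lambda>x. x)"
    using linear_borel_measurable[OF lin(1)] linear_borel_measurable[OF lin(2)]
    by (simp add: distr_distr comp_def E'E)
  also have "\<dots> = lborel"
    by (rule distr_id2) simp
  finally show "distr lborel borel E' = lborel" .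
qed

text \<open>The library proves this for \<open>real^'n\<close> with \<open>'n\<close> finite and well-ordered; the type \<open>'a basis_index\<close>
  provides such an index type of cardinality \<open>DIM('a)\<close>, and orthonormal coordinates transfer the result.\<close>

lemma lborel_eq_density_distr_linear:
  fixes T :: "'a::euclidean_space \<Rightarrow> 'b::euclidean_space"
  assumes T: "linear T" and bT: "bij T"
  shows "\<exists>c>0. lborel = density (distr lborel borel T) (\<lambda>_. ennreal c)"
proof -
  have dimeq: "DIM('a) = DIM('b)"
  proof -
    have "dim (T ` UNIV) = dim (UNIV :: 'a set)"
      by (rule dim_image_eq[OF T]) (use bT in \<open>auto simp: bij_def inj_on_def\<close>)
    moreover have "T ` UNIV = UNIV" using bT by (simp add: bij_def)
    ultimately show ?thesis by simp
  qed
  obtain \<beta> :: "'a basis_index \<Rightarrow> 'b" where \<beta>: "bij_betw \<beta> UNIV Basis"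
    using finite_same_card_bij[of "UNIV :: 'a basis_index set" "Basis :: 'b set"] card_basis_index[where 'a='a] dimeq
    by auto
  obtain Ea :: "'a \<Rightarrow> real^'a basis_index" and Ea'
    where Ea: "linear Ea" "linear Ea'" "\<And>x. Ea' (Ea x) = x" "\<And>v. Ea (Ea' v) = v"
      and la: "distr lborel borel Ea' = lborel"
    by (rule exists_lborel_coordinates[OF bij_rep_basis_index]) blast
  obtain Eb :: "'b \<Rightarrow> real^'a basis_index" and Eb'
    where Eb: "linear Eb" "linear Eb'" "\<And>x. Eb' (Eb x) = x" "\<And>v. Eb (Eb' v) = v"
      and lb: "distr lborel borel Eb' = lborel"
    by (rule exists_lborel_coordinates[OF \<beta>]) blast
  define G where "G = Eb \<circ> T \<circ> Ea'"
  define H where "H = Ea \<circ> inv T \<circ> Eb'"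
  have "linear G" "linear H"
    unfolding G_def H_def using Ea Eb T linear_inv[OF T bT] by (auto intro: linear_compose)
  moreover have "H (G x) = x" "G (H x) = x" for x
    using bT by (simp_all add: G_def H_def Ea Eb bij_def inv_f_f surj_f_inv_f)
  ultimately obtain c where c: "c > 0" and ln: "lborel = density (distr lborel borel G) (\<lambda>_. ennreal c)"
    using lborel_eq_density_distr_linear_vec by blast
  note meas = linear_borel_measurable[OF T] linear_borel_measurable[OF Ea(2)]
    linear_borel_measurable[OF Eb(2)] linear_borel_measurable[OF \<open>linear G\<close>]
  have "(lborel :: 'b measure) = distr (density (distr lborel borel G) (\<lambda>_. ennreal c)) borel Eb'"
    using lb ln by simp
  also have "\<dots> = density (distr lborel borel (Eb' \<circ> G)) (\<lambda>_. ennreal c)"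
    using meas by (simp add: distr_density_const distr_distr)
  also have "Eb' \<circ> G = T \<circ> Ea'"
    by (simp add: G_def fun_eq_iff Eb)
  also have "distr lborel borel (T \<circ> Ea') = distr lborel borel T"
    using meas by (simp add: distr_distr[symmetric] la)
  finally show ?thesis using c by blast
qed

lemma lborel_integral_linear_change:
  fixes h :: "'a::euclidean_space \<Rightarrow> 'b::{banach,second_countable_topology}" and F :: "'c::euclidean_space \<Rightarrow> 'a"
  assumes eq: "(lborel :: 'a measure) = density (distr lborel borel F) (\<lambda>_. ennreal c)" and c: "c > 0"
    and Fm: "F \<in> borel_measurable borel" and hm: "h \<in> borel_measurable borel"
  shows "integrable lborel h \<longleftrightarrow> integrable lborel (\<lambda>z. h (F z))"
    and "integral\<^sup>L lborel h = c *\<^sub>R integral\<^sup>L lborel (\<lambda>z. h (F z))"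
proof -
  have hm': "h \<in> borel_measurable (distr lborel borel F)" using hm by simp
  have "integrable lborel h \<longleftrightarrow> integrable (density (distr lborel borel F) (\<lambda>_. ennreal c)) h"
    by (subst eq) simp
  also have "\<dots> \<longleftrightarrow> integrable (distr lborel borel F) (\<lambda>x. c *\<^sub>R h x)"
    using c hm' by (intro integrable_density) auto
  also have "\<dots> \<longleftrightarrow> integrable (distr lborel borel F) h"
  proof
    assume "integrable (distr lborel borel F) (\<lambda>x. c *\<^sub>R h x)"
    then have "integrable (distr lborel borel F) (\<lambda>x. (1/c) *\<^sub>R (c *\<^sub>R h x))" by (rule integrable_scaleR_right)
    then show "integrable (distr lborel borel F) h" using c by simp
  qed (rule integrable_scaleR_right)
  also have "\<dots> \<longleftrightarrow> integrable lborel (\<lambda>z. h (F z))"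
    using Fm hm by (simp add: integrable_distr_eq)
  finally show "integrable lborel h \<longleftrightarrow> integrable lborel (\<lambda>z. h (F z))" .
  have "integral\<^sup>L lborel h = integral\<^sup>L (density (distr lborel borel F) (\<lambda>_. ennreal c)) h"
    by (subst eq) simp
  also have "\<dots> = integral\<^sup>L (distr lborel borel F) (\<lambda>x. c *\<^sub>R h x)"
    using c hm' by (intro integral_density) auto
  also have "\<dots> = c *\<^sub>R integral\<^sup>L (distr lborel borel F) h" by simp
  also have "integral\<^sup>L (distr lborel borel F) h = integral\<^sup>L lborel (\<lambda>z. h (F z))"
    using Fm hm by (simp add: integral_distr)
  finally show "integral\<^sup>L lborel h = c *\<^sub>R integral\<^sup>L lborel (\<lambda>z. h (F z))" .
qed

lemma integral_normalized_lborel_linear: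
  fixes T :: "'a::euclidean_space \<Rightarrow> 'b::euclidean_space" and w :: "'b \<Rightarrow> real"
    and h :: "'b \<Rightarrow> 'c::{banach,second_countable_topology}"
  assumes T: "linear T" "bij T" and wm: "w \<in> borel_measurable borel"
    and Z: "integral\<^sup>L lborel (\<lambda>z. w (T z)) > 0" and hm: "h \<in> borel_measurable borel"
  defines "M \<equiv> density lborel (\<lambda>_. ennreal (1 / integral\<^sup>L lborel w))"
  shows "integrable M h \<longleftrightarrow> integrable lborel (\<lambda>z. h (T z))"
    and "integral\<^sup>L M h = (1 / integral\<^sup>L lborel (\<lambda>z. w (T z))) *\<^sub>R integral\<^sup>L lborel (\<lambda>z. h (T z))"
proof -
  obtain c where c: "c > 0" and lb: "lborel = density (distr lborel borel T) (\<lambda>_. ennreal c)"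
    using lborel_eq_density_distr_linear[OF T] by blast
  note change = lborel_integral_linear_change[OF lb c linear_borel_measurable[OF T(1)]]
  have Zc: "integral\<^sup>L lborel w = c * integral\<^sup>L lborel (\<lambda>z. w (T z))"
    using change(2)[OF wm] by simp
  then have Zpos: "integral\<^sup>L lborel w > 0" using c Z by simp
  have "integrable M h \<longleftrightarrow> integrable lborel (\<lambda>x. (1 / integral\<^sup>L lborel w) *\<^sub>R h x)"
    unfolding M_def using Zpos hm by (intro integrable_density) auto
  also have "\<dots> \<longleftrightarrow> integrable lborel h"
  proof
    assume "integrable lborel (\<lambda>x. (1 / integral\<^sup>L lborel w) *\<^sub>R h x)"
    then have "integrable lborel (\<lambda>x. integral\<^sup>L lborel w *\<^sub>R ((1 / integral\<^sup>L lborel w) *\<^sub>R h x))"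
      by (rule integrable_scaleR_right)
    then show "integrable lborel h" using Zpos by simp
  qed (rule integrable_scaleR_right)
  finally show "integrable M h \<longleftrightarrow> integrable lborel (\<lambda>z. h (T z))"
    using change(1)[OF hm] by simp
  have "integral\<^sup>L M h = integral\<^sup>L lborel (\<lambda>x. (1 / integral\<^sup>L lborel w) *\<^sub>R h x)"
    unfolding M_def using Zpos hm by (intro integral_density) auto
  also have "\<dots> = (1 / integral\<^sup>L lborel (\<lambda>z. w (T z))) *\<^sub>R integral\<^sup>L lborel (\<lambda>z. h (T z))"
    using c by (simp add: change(2)[OF hm] Zc)
  finally show "integral\<^sup>L M h = (1 / integral\<^sup>L lborel (\<lambda>z. w (T z))) *\<^sub>R integral\<^sup>L lborel (\<lambda>z. h (T z))" .
qed
section \<open>Orthonormalisation of a positive definite form\<close>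

lemma bilinear_sum_left: "bilinear B \<Longrightarrow> B (\<Sum>i\<in>S. f i) y = (\<Sum>i\<in>S. B (f i) y)"
  using linear_sum[of "\<lambda>x. B x y"] by (simp add: bilinear_def)

lemma bilinear_sum_right: "bilinear B \<Longrightarrow> B y (\<Sum>i\<in>S. f i) = (\<Sum>i\<in>S. B y (f i))"
  using linear_sum[of "B y"] by (simp add: bilinear_def)

lemma extend_orthonormal_set:
  fixes B :: "'a::real_vector \<Rightarrow> 'a \<Rightarrow> real"
  assumes bil: "bilinear B" and pos: "\<And>x. x \<noteq> 0 \<Longrightarrow> B x x > 0"
    and F: "finite F" and ON: "\<forall>f\<in>F. \<forall>g\<in>F. B f g = (if f = g then 1 else 0)"
    and x: "x \<notin> span F"
  obtains e where "e \<notin> F" "B e e = 1" "\<And>g. g \<in> F \<Longrightarrow> B e g = 0"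
proof
  define y where "y = x - (\<Sum>f\<in>F. B x f *\<^sub>R f)"
  have "y \<noteq> 0"
  proof
    assume "y = 0"
    then have "x = (\<Sum>f\<in>F. B x f *\<^sub>R f)" unfolding y_def by simp
    also have "\<dots> \<in> span F" by (intro span_sum span_scale span_base)
    finally show False using x by simp
  qed
  then have yy: "B y y > 0" by (rule pos)
  have yg: "B y g = 0" if g: "g \<in> F" for g
  proof -
    have "B y g = B x g - (\<Sum>f\<in>F. B x f * B f g)"
      unfolding y_def by (simp add: bilinear_lsub[OF bil] bilinear_sum_left[OF bil] bilinear_lmul[OF bil])
    also have "(\<Sum>f\<in>F. B x f * B f g) = (\<Sum>f\<in>F. if f = g then B x g else 0)"
      using ON g by (intro sum.cong refl) auto
    also have "\<dots> = B x g" using g F by (simp add: sum.delta')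
    finally show ?thesis by simp
  qed
  define e where "e = (1 / sqrt (B y y)) *\<^sub>R y"
  show ee: "B e e = 1"
    unfolding e_def using yy
    by (simp add: bilinear_lmul[OF bil] bilinear_rmul[OF bil] real_sqrt_mult[symmetric] power2_eq_square[symmetric])
  show eg: "B e g = 0" if "g \<in> F" for g
    unfolding e_def using yg[OF that] by (simp add: bilinear_lmul[OF bil])
  show "e \<notin> F" using ee eg by force
qed

lemma exists_orthonormal_set:
  fixes B :: "'a::euclidean_space \<Rightarrow> 'a \<Rightarrow> real"
  assumes bil: "bilinear B" and sym: "\<And>x y. B x y = B y x" and pos: "\<And>x. x \<noteq> 0 \<Longrightarrow> B x x > 0"
  shows "n \<le> DIM('a) \<Longrightarrow> \<exists>F. finite F \<and> card F = n \<and> (\<forall>f\<in>F. \<forall>g\<in>F. B f g = (if f = g then 1 else 0))"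
proof (induction n)
  case 0
  then show ?case by (intro exI[of _ "{}"]) auto
next
  case (Suc n)
  then obtain F where F: "finite F" "card F = n" and ON: "\<forall>f\<in>F. \<forall>g\<in>F. B f g = (if f = g then 1 else 0)"
    by auto
  have "span F \<noteq> UNIV"
  proof
    assume "span F = UNIV"
    then have "dim (UNIV::'a set) \<le> card F" using dim_le_card[of UNIV F] F by simp
    then show False using Suc.prems F by simp
  qed
  then obtain x where "x \<notin> span F" by auto
  then obtain e where "e \<notin> F" "B e e = 1" "\<And>g. g \<in> F \<Longrightarrow> B e g = 0"
    using extend_orthonormal_set[OF bil pos F(1) ON] by blast
  then show ?case
    using F ON sym by (intro exI[of _ "insert e F"]) auto
qed

lemma bilinear_orthonormal_coordinates:
  fixes B :: "'a::euclidean_space \<Rightarrow> 'a \<Rightarrow> real"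
  assumes bil: "bilinear B" and \<beta>: "bij_betw \<beta> (Basis::'a set) F"
    and ON: "\<forall>f\<in>F. \<forall>g\<in>F. B f g = (if f = g then 1 else 0)"
  shows "B (\<Sum>b\<in>Basis. (x \<bullet> b) *\<^sub>R \<beta> b) (\<Sum>c\<in>Basis. (y \<bullet> c) *\<^sub>R \<beta> c) = x \<bullet> y"
proof -
  have \<beta>\<beta>: "B (\<beta> b) (\<beta> c) = (if c = b then 1 else 0)" if "b \<in> Basis" "c \<in> Basis" for b c
  proof -
    have "\<beta> b \<in> F" "\<beta> c \<in> F" using that \<beta> by (auto simp: bij_betw_def)
    moreover have "\<beta> b = \<beta> c \<longleftrightarrow> b = c" using that \<beta> by (auto simp: bij_betw_def inj_on_def)
    ultimately show ?thesis using ON by auto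
  qed
  have "B (\<Sum>b\<in>Basis. (x \<bullet> b) *\<^sub>R \<beta> b) (\<Sum>c\<in>Basis. (y \<bullet> c) *\<^sub>R \<beta> c)
      = (\<Sum>b\<in>Basis. (x \<bullet> b) * B (\<beta> b) (\<Sum>c\<in>Basis. (y \<bullet> c) *\<^sub>R \<beta> c))"
    by (simp add: bilinear_sum_left[OF bil] bilinear_lmul[OF bil])
  also have "\<dots> = (\<Sum>b\<in>Basis. (x \<bullet> b) * (\<Sum>c\<in>Basis. (y \<bullet> c) * B (\<beta> b) (\<beta> c)))"
    by (simp add: bilinear_sum_right[OF bil] bilinear_rmul[OF bil])
  also have "\<dots> = (\<Sum>b\<in>Basis. (x \<bullet> b) * (y \<bullet> b))"
  proof (intro sum.cong refl)
    fix b :: 'a assume b: "b \<in> Basis"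
    have "(\<Sum>c\<in>Basis. (y \<bullet> c) * B (\<beta> b) (\<beta> c)) = (\<Sum>c\<in>Basis. if c = b then y \<bullet> b else 0)"
      using b by (intro sum.cong refl) (simp add: \<beta>\<beta>)
    then show "(x \<bullet> b) * (\<Sum>c\<in>Basis. (y \<bullet> c) * B (\<beta> b) (\<beta> c)) = (x \<bullet> b) * (y \<bullet> b)"
      using b by (simp add: sum.delta')
  qed
  also have "\<dots> = x \<bullet> y" by (rule euclidean_inner[symmetric])
  finally show ?thesis .
qed

lemma exists_linear_isometry_to_inner:
  fixes B :: "'a::euclidean_space \<Rightarrow> 'a \<Rightarrow> real"
  assumes bil: "bilinear B" and sym: "\<And>x y. B x y = B y x" and pos: "\<And>x. x \<noteq> 0 \<Longrightarrow> B x x > 0"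
  shows "\<exists>R::'a\<Rightarrow>'a. linear R \<and> bij R \<and> (\<forall>x y::'a. B (R x) (R y) = x \<bullet> y)"
proof -
  obtain F where F: "finite F" "card F = DIM('a)" and ON: "\<forall>f\<in>F. \<forall>g\<in>F. B f g = (if f = g then 1 else 0)"
    using exists_orthonormal_set[OF bil sym pos, of "DIM('a)"] by auto
  obtain \<beta> where \<beta>: "bij_betw \<beta> (Basis::'a set) F"
    using finite_same_card_bij[of Basis F] F by auto
  define R where "R = (\<lambda>x. \<Sum>b\<in>Basis. (x \<bullet> b) *\<^sub>R \<beta> b)"
  have linR: "linear R" unfolding R_def
    by (auto intro!: linearI simp: inner_add_left sum.distrib scaleR_add_left scaleR_sum_right)
  have BR: "B (R x) (R y) = x \<bullet> y" for x y
    unfolding R_def by (rule bilinear_orthonormal_coordinates[OF bil \<beta> ON])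
  have inj: "inj R"
  proof (rule linear_injective_0[OF linR, THEN iffD2], intro allI impI)
    fix x assume "R x = 0"
    then have "x \<bullet> x = B 0 0" using BR[of x x] by simp
    also have "B 0 0 = 0" by (rule bilinear_lzero[OF bil])
    finally show "x = 0" by simp
  qed
  then have "bij R" using linear_inj_imp_surj[OF linR] by (simp add: bij_def)
  then show ?thesis using linR BR by blast
qed

definition lincombs :: "('i \<Rightarrow> 'x \<Rightarrow> complex) \<Rightarrow> ('x \<Rightarrow> complex) set" where
  "lincombs G = {f. \<exists>S c. finite S \<and> f = (\<lambda>x. \<Sum>i\<in>S. c i * G i x)}"

lemma lincombsI: "finite S \<Longrightarrow> (\<lambda>x. \<Sum>i\<in>S. c i * G i x) \<in> lincombs G"
  unfolding lincombs_def by blast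

lemma lincombsE:
  assumes "f \<in> lincombs G"
  obtains S c where "finite S" "f = (\<lambda>x. \<Sum>i\<in>S. c i * G i x)"
  using assms unfolding lincombs_def by blast

lemma HHc_eq_lincombs: "HHc br J = lincombs (KH br J)"
  by (simp add: HHc_def lincombs_def)

lemma csubspace_fun_lincombs: "csubspace_fun (lincombs G)"
  unfolding csubspace_fun_def
proof (intro conjI ballI allI)
  show "(\<lambda>_. 0) \<in> lincombs G"
    using lincombsI[of "{}"] by simp
  fix f g and a :: complex
  assume "f \<in> lincombs G" "g \<in> lincombs G"
  then obtain S1 c1 S2 c2 where S: "finite S1" "finite S2"
    and f: "f = (\<lambda>x. \<Sum>i\<in>S1. c1 i * G i x)" and g: "g = (\<lambda>x. \<Sum>i\<in>S2. c2 i * G i x)"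
    by (metis lincombsE)
  define c where "c i = a * (if i \<in> S1 then c1 i else 0) + (if i \<in> S2 then c2 i else 0)" for i
  have "(\<Sum>i\<in>S1. c1 i * G i x) = (\<Sum>i\<in>S1 \<union> S2. (if i \<in> S1 then c1 i else 0) * G i x)"
    and "(\<Sum>i\<in>S2. c2 i * G i x) = (\<Sum>i\<in>S1 \<union> S2. (if i \<in> S2 then c2 i else 0) * G i x)" for x
    using S by (auto intro: sum.mono_neutral_cong_left)
  then have "(\<lambda>x. a * f x + g x) = (\<lambda>x. \<Sum>i\<in>S1 \<union> S2. c i * G i x)"
    by (simp add: f g c_def sum_distrib_left sum.distrib[symmetric] algebra_simps)
  then show "(\<lambda>x. a * f x + g x) \<in> lincombs G"
    using S lincombsI[of "S1 \<union> S2"] by simp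
qed

lemma lincombs_inverse_maps:
  fixes A :: "('x \<Rightarrow> complex) \<Rightarrow> 'y \<Rightarrow> complex" and B :: "('y \<Rightarrow> complex) \<Rightarrow> 'x \<Rightarrow> complex"
  assumes A: "\<And>S c. A (\<lambda>x. \<Sum>i\<in>S. c i * G i x) = (\<lambda>y. \<Sum>i\<in>S. c i * G' i y)"
    and B: "\<And>S c. B (\<lambda>y. \<Sum>i\<in>S. c i * G' i y) = (\<lambda>x. \<Sum>i\<in>S. c i * G i x)"
  shows "A ` lincombs G = lincombs G'" and "B ` lincombs G' = lincombs G"
    and "\<And>f. f \<in> lincombs G \<Longrightarrow> B (A f) = f" and "\<And>f. f \<in> lincombs G' \<Longrightarrow> A (B f) = f"
proof -
  show "B (A f) = f" if "f \<in> lincombs G" for f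
    using that by (auto elim!: lincombsE simp: A B)
  show "A (B f) = f" if "f \<in> lincombs G'" for f
    using that by (auto elim!: lincombsE simp: A B)
  show "A ` lincombs G = lincombs G'"
    by (force elim!: lincombsE simp: A B intro: lincombsI
        intro!: image_eqI[where x="\<lambda>x. \<Sum>i\<in>_. _ i * G i x"])
  show "B ` lincombs G' = lincombs G"
    by (force elim!: lincombsE simp: A B intro: lincombsI
        intro!: image_eqI[where x="\<lambda>y. \<Sum>i\<in>_. _ i * G' i y"])
qed

lemma integral_kernel_lincomb:
  fixes k :: "'x \<Rightarrow> 'y \<Rightarrow> complex"
  assumes int: "\<And>i x. integrable M (\<lambda>y. G i y * k x y)"
    and val: "\<And>i x. integral\<^sup>L M (\<lambda>y. G i y * k x y) = G' i x"
  shows "integrable M (\<lambda>y. (\<Sum>i\<in>S. c i * G i y) * k x y)"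
    and "(\<lambda>x. integral\<^sup>L M (\<lambda>y. (\<Sum>i\<in>S. c i * G i y) * k x y)) = (\<lambda>x. \<Sum>i\<in>S. c i * G' i x)"
proof -
  have eq: "(\<lambda>y. (\<Sum>i\<in>S. c i * G i y) * k x y) = (\<lambda>y. \<Sum>i\<in>S. c i * (G i y * k x y))" for x
    by (simp add: sum_distrib_right mult.assoc)
  show "integrable M (\<lambda>y. (\<Sum>i\<in>S. c i * G i y) * k x y)"
    unfolding eq using int by auto
  show "(\<lambda>x. integral\<^sup>L M (\<lambda>y. (\<Sum>i\<in>S. c i * G i y) * k x y)) = (\<lambda>x. \<Sum>i\<in>S. c i * G' i x)"
    unfolding eq using int by (simp add: val)
qed

lemma integral_cnj_lincomb_mult:
  fixes A B :: "'i \<Rightarrow> 'x \<Rightarrow> complex"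
  assumes int: "\<And>\<sigma> \<tau>. integrable M (\<lambda>x. cnj (A \<sigma> x) * B \<tau> x)"
  shows "integrable M (\<lambda>x. cnj (\<Sum>\<sigma>\<in>S. a \<sigma> * A \<sigma> x) * (\<Sum>\<tau>\<in>S'. b \<tau> * B \<tau> x))"
    and "integral\<^sup>L M (\<lambda>x. cnj (\<Sum>\<sigma>\<in>S. a \<sigma> * A \<sigma> x) * (\<Sum>\<tau>\<in>S'. b \<tau> * B \<tau> x))
         = (\<Sum>\<sigma>\<in>S. \<Sum>\<tau>\<in>S'. cnj (a \<sigma>) * b \<tau> * integral\<^sup>L M (\<lambda>x. cnj (A \<sigma> x) * B \<tau> x))"
proof -
  have eq: "(\<lambda>x. cnj (\<Sum>\<sigma>\<in>S. a \<sigma> * A \<sigma> x) * (\<Sum>\<tau>\<in>S'. b \<tau> * B \<tau> x))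
     = (\<lambda>x. \<Sum>\<sigma>\<in>S. \<Sum>\<tau>\<in>S'. cnj (a \<sigma>) * b \<tau> * (cnj (A \<sigma> x) * B \<tau> x))"
    by (simp add: sum_distrib_left sum_distrib_right mult_ac)
  show "integrable M (\<lambda>x. cnj (\<Sum>\<sigma>\<in>S. a \<sigma> * A \<sigma> x) * (\<Sum>\<tau>\<in>S'. b \<tau> * B \<tau> x))"
    unfolding eq using int by auto
  show "integral\<^sup>L M (\<lambda>x. cnj (\<Sum>\<sigma>\<in>S. a \<sigma> * A \<sigma> x) * (\<Sum>\<tau>\<in>S'. b \<tau> * B \<tau> x))
         = (\<Sum>\<sigma>\<in>S. \<Sum>\<tau>\<in>S'. cnj (a \<sigma>) * b \<tau> * integral\<^sup>L M (\<lambda>x. cnj (A \<sigma> x) * B \<tau> x))"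
    unfolding eq using int by simp
qed

lemma integral_cnj_lincomb_mult_eq:
  fixes A B :: "'i \<Rightarrow> 'x \<Rightarrow> complex" and A' B' :: "'i \<Rightarrow> 'y \<Rightarrow> complex"
  assumes "\<And>\<sigma> \<tau>. integrable M (\<lambda>x. cnj (A \<sigma> x) * B \<tau> x)"
    and "\<And>\<sigma> \<tau>. integrable N (\<lambda>y. cnj (A' \<sigma> y) * B' \<tau> y)"
    and "\<And>\<sigma> \<tau>. integral\<^sup>L M (\<lambda>x. cnj (A \<sigma> x) * B \<tau> x) = integral\<^sup>L N (\<lambda>y. cnj (A' \<sigma> y) * B' \<tau> y)"
  shows "integral\<^sup>L M (\<lambda>x. cnj (\<Sum>\<sigma>\<in>S. a \<sigma> * A \<sigma> x) * (\<Sum>\<tau>\<in>S'. b \<tau> * B \<tau> x))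
       = integral\<^sup>L N (\<lambda>y. cnj (\<Sum>\<sigma>\<in>S. a \<sigma> * A' \<sigma> y) * (\<Sum>\<tau>\<in>S'. b \<tau> * B' \<tau> y))"
  by (simp only: integral_cnj_lincomb_mult(2)[OF assms(1)] integral_cnj_lincomb_mult(2)[OF assms(2)] assms(3))

section \<open>Coordinates adapted to the structure\<close>

locale bargmann_setting =
  fixes br :: "'l::euclidean_space \<Rightarrow> 'l \<Rightarrow> real"
    and J :: "'l \<Rightarrow> 'l"
    and q :: "'l \<Rightarrow> 'q::euclidean_space"
    and j :: "'q \<Rightarrow> 'l"
  assumes bil: "bilinear br"
    and J_lin: "linear J"
    and J_sq: "\<forall>x. J (J x) = - x"
    and J_sympl: "\<forall>x y. omega br (J x) (J y) = omega br x y"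
    and g_pos: "\<forall>x. x \<noteq> 0 \<longrightarrow> gform br J x x > 0"
    and q_lin: "linear q"
    and q_ker: "{x. q x = 0} = Mspace br"
    and j_lin: "linear j"
    and j_sect: "\<forall>\<phi>. q (j \<phi>) = \<phi>"
    and j_range: "\<forall>\<phi>. j \<phi> \<in> J ` Mspace br"
begin

abbreviation "om \<equiv> omega br"
abbreviation "g \<equiv> gform br J"
abbreviation "ci \<equiv> cinner br J"
abbreviation "M \<equiv> Mspace br"

lemma om_eq: "om x y = br x y / 2 - br y x / 2" by (simp add: omega_def)

lemma om_bil: "bilinear om"
  unfolding bilinear_def omega_def
  by (auto intro!: linearI simp: bilinear_ladd[OF bil] bilinear_radd[OF bil] bilinear_lmul[OF bil] bilinear_rmul[OF bil] field_simps)

lemma om_skew: "om x y = - om y x" by (simp add: omega_def)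

lemma JJ: "J (J x) = - x" using J_sq by simp

lemma g_eq: "g x y = 2 * om x (J y)" by (simp add: gform_def)

lemma g_bil: "bilinear g"
  unfolding bilinear_def gform_def
  by (auto intro!: linearI simp: bilinear_ladd[OF om_bil] bilinear_radd[OF om_bil] bilinear_lmul[OF om_bil] bilinear_rmul[OF om_bil]
      linear_add[OF J_lin] linear_scale[OF J_lin])

lemma g_sym: "g x y = g y x"
proof -
  have "g y x = 2 * om y (J x)" by (simp add: g_eq)
  also have "om y (J x) = om (J y) (J (J x))" using J_sympl by simp
  also have "\<dots> = - om (J y) x" by (simp add: JJ bilinear_rneg[OF om_bil])
  also have "\<dots> = om x (J y)" by (simp add: om_skew[of "J y" x])
  finally show ?thesis by (simp add: g_eq)
qed

lemma gJ: "g (J x) (J y) = g x y"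
  using J_sympl by (simp add: g_eq)

lemma g_zero: "g x x = 0 \<longleftrightarrow> x = 0"
  using g_pos by (auto simp: bilinear_lzero[OF g_bil])

lemma M_br: "m \<in> M \<Longrightarrow> br x m = 0" by (simp add: Mspace_def)
lemma M_brL: "m \<in> M \<Longrightarrow> br m y = 2 * om m y" by (simp add: om_eq M_br)
lemma M_diff: "m \<in> M \<Longrightarrow> m' \<in> M \<Longrightarrow> m - m' \<in> M"
  by (simp add: Mspace_def bilinear_rsub[OF bil])
lemma M_minus: "m \<in> M \<Longrightarrow> - m \<in> M"
  by (simp add: Mspace_def bilinear_rneg[OF bil])
lemma M_iso: "m \<in> M \<Longrightarrow> m' \<in> M \<Longrightarrow> om m m' = 0"
  by (simp add: om_eq M_br)
lemma qM: "q x = 0 \<longleftrightarrow> x \<in> M" using q_ker by blast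

lemma Jj_M: "J (j \<phi>) \<in> M"
proof -
  obtain m where m: "m \<in> M" "j \<phi> = J m" using j_range by blast
  then show ?thesis by (simp add: JJ M_minus)
qed

lemma om_jj: "om (j \<phi>) (j \<psi>) = 0"
proof -
  have "om (J (j \<phi>)) (J (j \<psi>)) = 0" by (rule M_iso[OF Jj_M Jj_M])
  then show ?thesis using J_sympl by simp
qed

lemma JM_fix:
  assumes "m \<in> M" shows "J m = j (q (J m))"
proof -
  define y where "y = J m - j (q (J m))"
  have "q y = 0" unfolding y_def by (simp add: linear_diff[OF q_lin] j_sect)
  then have yM: "y \<in> M" by (simp add: qM)
  obtain m' where m': "m' \<in> M" "j (q (J m)) = J m'" using j_range by blast
  have "y = J (m - m')" unfolding y_def using m' by (simp add: linear_diff[OF J_lin])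
  then have "J y = - (m - m')" by (simp add: JJ)
  then have "g y y = 2 * om y (- (m - m'))" by (simp add: g_eq)
  also have "\<dots> = 0" using M_iso[OF yM M_diff[OF assms m'(1)]] by (simp only: bilinear_rneg[OF om_bil])
  finally have "y = 0" by (simp add: g_zero)
  then show ?thesis by (simp add: y_def)
qed

definition gQ :: "'q \<Rightarrow> 'q \<Rightarrow> real" where "gQ x y = g (j x) (j y)"

lemma gQ_bil: "bilinear gQ"
  unfolding bilinear_def gQ_def
  by (auto intro!: linearI simp: bilinear_ladd[OF g_bil] bilinear_radd[OF g_bil] bilinear_lmul[OF g_bil] bilinear_rmul[OF g_bil]
      linear_add[OF j_lin] linear_scale[OF j_lin])

lemma gQ_sym: "gQ x y = gQ y x" by (simp add: gQ_def g_sym)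

lemma gQ_pos: "x \<noteq> 0 \<Longrightarrow> gQ x x > 0"
proof -
  assume "x \<noteq> 0"
  then have "j x \<noteq> 0" using j_sect by (metis linear_0[OF q_lin])
  then show ?thesis using g_pos by (simp add: gQ_def)
qed

definition R :: "'q \<Rightarrow> 'q" where
  "R = (SOME R. linear R \<and> bij R \<and> (\<forall>x y::'q. gQ (R x) (R y) = x \<bullet> y))"

lemma R_props: "linear R" "bij R" "gQ (R x) (R y) = x \<bullet> y"
proof -
  have "\<exists>R::'q\<Rightarrow>'q. linear R \<and> bij R \<and> (\<forall>x y::'q. gQ (R x) (R y) = x \<bullet> y)"
    by (rule exists_linear_isometry_to_inner[OF gQ_bil]) (auto simp: gQ_sym gQ_pos)
  then have "linear R \<and> bij R \<and> (\<forall>x y::'q. gQ (R x) (R y) = x \<bullet> y)"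
    unfolding R_def by (rule someI_ex)
  then show "linear R" "bij R" "gQ (R x) (R y) = x \<bullet> y" by auto
qed

text \<open>\<open>e\<close> and \<open>f = J \<circ> e\<close> carry the \<open>g\<close>-orthonormal coordinates of \<open>Q\<close>
  onto \<open>JM\<close> and onto \<open>M\<close>.\<close>

definition e :: "'q \<Rightarrow> 'l" where "e x = j (R x)"
definition f :: "'q \<Rightarrow> 'l" where "f x = J (e x)"
definition T :: "'q \<times> 'q \<Rightarrow> 'l" where "T z = e (snd z) + f (fst z)"

lemma lin_e: "linear e" unfolding e_def[abs_def] using linear_compose[OF R_props(1) j_lin] by (simp add: o_def)
lemma lin_f: "linear f" unfolding f_def[abs_def] using linear_compose[OF lin_e J_lin] by (simp add: o_def)
lemma lin_T: "linear T"
  unfolding T_def[abs_def]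
  by (auto intro!: linearI simp: linear_add[OF lin_e] linear_add[OF lin_f] linear_scale[OF lin_e] linear_scale[OF lin_f] algebra_simps)

lemma g_ee: "g (e x) (e y) = x \<bullet> y" using R_props(3) by (simp add: e_def gQ_def)
lemma g_ff: "g (f x) (f y) = x \<bullet> y" by (simp add: f_def gJ g_ee)
lemma om_ee: "om (e x) (e y) = 0" by (simp add: e_def om_jj)
lemma om_ff: "om (f x) (f y) = 0" using J_sympl by (simp add: f_def om_ee)
lemma om_ef: "om (e x) (f y) = (x \<bullet> y) / 2" using g_ee[of x y] by (simp add: g_eq f_def)
lemma om_fe: "om (f y) (e x) = - (x \<bullet> y) / 2" using om_ef[of x y] om_skew[of "f y" "e x"] by simp
lemma g_ef: "g (e x) (f y) = 0"
proof -
  have "g (e x) (f y) = 2 * om (e x) (J (f y))" by (simp add: g_eq)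
  also have "J (f y) = - e y" by (simp add: f_def JJ)
  finally show ?thesis by (simp add: bilinear_rneg[OF om_bil] om_ee)
qed
lemma g_fe: "g (f y) (e x) = 0" using g_ef g_sym by metis
lemma q_e: "q (e x) = R x" by (simp add: e_def j_sect)
lemma f_M: "f x \<in> M" by (simp add: f_def e_def Jj_M)
lemma q_f: "q (f x) = 0" using f_M qM by blast
lemma br_xf: "br v (f y) = 0" by (rule M_br[OF f_M])
lemma br_fx: "br (f y) v = 2 * om (f y) v" by (rule M_brL[OF f_M])

lemma T_pair: "T (a, b) = e b + f a" by (simp add: T_def)

lemma T_g: "g (T (a, b)) (T (a', b')) = a \<bullet> a' + b \<bullet> b'"
  by (simp add: T_pair bilinear_ladd[OF g_bil] bilinear_radd[OF g_bil] g_ee g_ff g_ef g_fe inner_commute)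

lemma T_om: "om (T (a, b)) (T (a', b')) = (b \<bullet> a' - a \<bullet> b') / 2"
  by (simp add: T_pair bilinear_ladd[OF om_bil] bilinear_radd[OF om_bil] om_ee om_ff om_ef om_fe inner_commute field_simps)

lemma T_ci: "ci (T (a, b)) (T (a', b')) = complex_of_real (a \<bullet> a' + b \<bullet> b') + \<i> * complex_of_real (b \<bullet> a' - a \<bullet> b')"
  by (simp add: cinner_def T_g T_om)

lemma T_br: "br (T (a, b)) (T (a, b)) = br (e b) (e b) - a \<bullet> b"
proof -
  have "br (T (a, b)) (T (a, b)) = br (e b) (e b) + br (f a) (e b)"
    by (simp add: T_pair bilinear_ladd[OF bil] bilinear_radd[OF bil] br_xf)
  also have "br (f a) (e b) = - (a \<bullet> b)" by (simp add: br_fx om_fe inner_commute)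
  finally show ?thesis by simp
qed

lemma q_T: "q (T (a, b)) = R b"
  by (simp add: T_pair linear_add[OF q_lin] q_e q_f)

lemma jR: "j (R x) = e x" by (simp add: e_def)

lemma T_inj: "inj T"
proof (rule linear_injective_0[OF lin_T, THEN iffD2], intro allI impI)
  fix z assume "T z = 0"
  then have "g (T z) (T z) = 0" by (simp add: bilinear_lzero[OF g_bil])
  then have "fst z \<bullet> fst z + snd z \<bullet> snd z = 0" using T_g[of "fst z" "snd z" "fst z" "snd z"] by simp
  then show "z = 0"
    by (metis add_nonneg_eq_0_iff inner_ge_zero inner_eq_zero_iff prod_eq_iff fst_zero snd_zero)
qed

lemma T_surj: "surj T"
proof -
  have Rs: "surj R" using R_props(2) by (simp add: bij_def)
  have "\<xi> \<in> range T" for \<xi>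
  proof -
    obtain b where b: "R b = q \<xi>" using Rs by (metis surjD)
    define m where "m = \<xi> - e b"
    have "q m = 0" by (simp add: m_def linear_diff[OF q_lin] q_e b)
    then have mM: "m \<in> M" by (simp add: qM)
    obtain a where a: "R a = - q (J m)" using Rs by (metis surjD)
    have "f a = J (j (- q (J m)))" by (simp add: f_def e_def a)
    also have "\<dots> = - J (j (q (J m)))" by (simp add: linear_neg[OF j_lin] linear_neg[OF J_lin])
    also have "\<dots> = - J (J m)" using JM_fix[OF mM] by simp
    also have "\<dots> = m" by (simp add: JJ)
    finally have "T (a, b) = \<xi>" by (simp add: T_pair m_def)
    then show ?thesis by (metis rangeI)
  qed
  then show ?thesis by blast
qed

lemma T_bij: "bij T" using T_inj T_surj by (simp add: bij_def)

lemma g_T_norm: "g (T z) (T z) = (norm z)\<^sup>2"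
  by (cases z) (simp add: T_g norm_Pair power2_norm_eq_inner)

lemma T_cover: obtains c d where "\<tau> = T (c, d)"
  using surjD[OF T_surj, of \<tau>] by (metis prod.collapse)

lemma R_cover: obtains x where "\<phi> = R x"
  using R_props(2) by (metis bij_pointE)

definition s :: "'q \<Rightarrow> real" where "s x = br (e x) (e x)"

lemma T_zero_left: "T (0, x) = e x" by (simp add: T_pair linear_0[OF lin_f])

lemma KH_T: "KH br J (T (c, d)) (T (a, b)) =
   exp ((complex_of_real (c \<bullet> a + d \<bullet> b) + \<i> * complex_of_real (d \<bullet> a - c \<bullet> b)) / 2)"
  by (simp add: KH_def T_ci)

lemma cnj_KH: "cnj (KH br J \<sigma> \<tau>) = KH br J \<tau> \<sigma>"
  by (simp add: KH_def cinner_def exp_cnj g_sym[of \<sigma> \<tau>] om_skew[of \<sigma> \<tau>] field_simps)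

lemma Bkern_T_R: "Bkern br J q j (T (a, b)) (R x) =
   exp (complex_of_real (x \<bullet> b - x \<bullet> x / 2 + (a \<bullet> a - b \<bullet> b) / 4)
     + \<i> * complex_of_real (x \<bullet> a - s x / 2 - (a \<bullet> b) / 2))"
proof -
  have "ci (j (R x)) (T (a, b)) = complex_of_real (x \<bullet> b) + \<i> * complex_of_real (x \<bullet> a)"
    using T_ci[of 0 x a b] by (simp add: jR T_zero_left[symmetric])
  moreover have "ci (j (q (T (a, b)))) (T (a, b)) = complex_of_real (b \<bullet> b) + \<i> * complex_of_real (b \<bullet> a)"
    using T_ci[of 0 b a b] by (simp add: q_T jR T_zero_left[symmetric])
  moreover have "g (j (R x)) (j (R x)) = x \<bullet> x" by (simp add: jR g_ee)
  moreover have "br (j (R x)) (j (R x)) = s x" by (simp add: jR s_def)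
  ultimately show ?thesis unfolding Bkern_def T_g
    by (intro arg_cong[where f=exp]) (simp add: complex_eq_iff inner_commute field_simps)
qed

lemma cnj_Bkern_T_R: "cnj (Bkern br J q j (T (a, b)) (R x)) =
   exp (complex_of_real (x \<bullet> b - x \<bullet> x / 2 + (a \<bullet> a - b \<bullet> b) / 4)
     - \<i> * complex_of_real (x \<bullet> a - s x / 2 - (a \<bullet> b) / 2))"
  unfolding Bkern_T_R exp_cnj by simp

lemma cnj_alpha_T: "cnj (alpha br J (T (a, b))) =
   exp (complex_of_real (- (a \<bullet> a + b \<bullet> b) / 4) - \<i> * complex_of_real ((s b - a \<bullet> b) / 2))"
  unfolding alpha_def T_br T_g s_def[symmetric] exp_cnj
  by (rule arg_cong[where f=exp]) (simp add: complex_eq_iff field_simps)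

lemma continuous_on_br [continuous_intros]:
  fixes u v :: "'a::t2_space \<Rightarrow> 'l"
  shows "continuous_on S u \<Longrightarrow> continuous_on S v \<Longrightarrow> continuous_on S (\<lambda>x. br (u x) (v x))"
  by (rule bilinear_continuous_on_compose[OF _ _ bil])

lemma continuous_on_g [continuous_intros]:
  fixes u v :: "'a::t2_space \<Rightarrow> 'l"
  shows "continuous_on S u \<Longrightarrow> continuous_on S v \<Longrightarrow> continuous_on S (\<lambda>x. g (u x) (v x))"
  by (rule bilinear_continuous_on_compose[OF _ _ g_bil])

lemma continuous_on_cinner [continuous_intros]:
  fixes u v :: "'a::t2_space \<Rightarrow> 'l"
  shows "continuous_on S u \<Longrightarrow> continuous_on S v \<Longrightarrow> continuous_on S (\<lambda>x. ci (u x) (v x))"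
  unfolding cinner_def by (intro continuous_intros bilinear_continuous_on_compose[OF _ _ om_bil])

lemma continuous_on_Bkern [continuous_intros]:
  fixes u :: "'a::euclidean_space \<Rightarrow> 'l" and v :: "'a \<Rightarrow> 'q"
  shows "continuous_on S u \<Longrightarrow> continuous_on S v \<Longrightarrow> continuous_on S (\<lambda>x. Bkern br J q j (u x) (v x))"
  unfolding Bkern_def
  by (intro continuous_intros linear_continuous_on_compose[OF _ j_lin] linear_continuous_on_compose[OF _ q_lin])
    auto

lemma continuous_on_KH [continuous_intros]:
  fixes u v :: "'a::t2_space \<Rightarrow> 'l"
  shows "continuous_on S u \<Longrightarrow> continuous_on S v \<Longrightarrow> continuous_on S (\<lambda>x. KH br J (u x) (v x))"
  unfolding KH_def by (intro continuous_intros) auto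

lemma continuous_on_alpha [continuous_intros]:
  fixes u :: "'a::t2_space \<Rightarrow> 'l"
  shows "continuous_on S u \<Longrightarrow> continuous_on S (\<lambda>x. alpha br J (u x))"
  unfolding alpha_def by (intro continuous_intros) auto

lemma muL_T:
  fixes h :: "'l \<Rightarrow> 'b::{banach,second_countable_topology}"
  assumes hm: "h \<in> borel_measurable borel"
  shows "integrable (muL br J) h \<longleftrightarrow> integrable lborel (\<lambda>z. h (T z))"
    and "integral\<^sup>L (muL br J) h = (1 / sqrt (2 * pi) ^ (DIM('q) + DIM('q))) *\<^sub>R integral\<^sup>L lborel (\<lambda>z. h (T z))"
proof -
  have wT: "(\<lambda>z. exp (- g (T z) (T z) / 2)) = (\<lambda>z::'q \<times> 'q. exp (- (1/2) * (norm z)\<^sup>2))"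
    by (simp add: g_T_norm)
  have Z: "integral\<^sup>L lborel (\<lambda>z. exp (- g (T z) (T z) / 2)) = sqrt (2 * pi) ^ (DIM('q) + DIM('q))"
    using gaussian_integral_euclidean_real(2)[of "1/2", where 'a="'q \<times> 'q"] unfolding wT by (simp add: ac_simps)
  have wm: "(\<lambda>\<xi>. exp (- g \<xi> \<xi> / 2)) \<in> borel_measurable borel"
    by (intro borel_measurable_continuous_onI continuous_intros) auto
  note N = integral_normalized_lborel_linear[OF lin_T T_bij wm _ hm, unfolded Z, folded muL_def]
  show "integrable (muL br J) h \<longleftrightarrow> integrable lborel (\<lambda>z. h (T z))"
    and "integral\<^sup>L (muL br J) h = (1 / sqrt (2 * pi) ^ (DIM('q) + DIM('q))) *\<^sub>R integral\<^sup>L lborel (\<lambda>z. h (T z))"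
    using N by simp_all
qed

lemma muQ_R:
  fixes h :: "'q \<Rightarrow> 'b::{banach,second_countable_topology}"
  assumes hm: "h \<in> borel_measurable borel"
  shows "integrable (muQ br J j) h \<longleftrightarrow> integrable lborel (\<lambda>x. h (R x))"
    and "integral\<^sup>L (muQ br J j) h = (1 / sqrt pi ^ DIM('q)) *\<^sub>R integral\<^sup>L lborel (\<lambda>x. h (R x))"
proof -
  have wR: "(\<lambda>x. exp (- g (j (R x)) (j (R x)))) = (\<lambda>x::'q. exp (- 1 * (norm x)\<^sup>2))"
    by (simp add: jR g_ee power2_norm_eq_inner)
  have Z: "integral\<^sup>L lborel (\<lambda>x. exp (- g (j (R x)) (j (R x)))) = sqrt pi ^ DIM('q)"
    using gaussian_integral_euclidean_real(2)[of 1, where 'a='q] unfolding wR by simp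
  have wm: "(\<lambda>\<phi>. exp (- g (j \<phi>) (j \<phi>))) \<in> borel_measurable borel"
    by (intro borel_measurable_continuous_onI continuous_intros linear_continuous_on_compose[OF _ j_lin])
  note N = integral_normalized_lborel_linear[OF R_props(1,2) wm _ hm, unfolded Z, folded muQ_def]
  show "integrable (muQ br J j) h \<longleftrightarrow> integrable lborel (\<lambda>x. h (R x))"
    and "integral\<^sup>L (muQ br J j) h = (1 / sqrt pi ^ DIM('q)) *\<^sub>R integral\<^sup>L lborel (\<lambda>x. h (R x))"
    using N by simp_all
qed

lemma nuL_muL:
  fixes h :: "'l \<Rightarrow> 'b::{banach,second_countable_topology}"
  assumes hm: "h \<in> borel_measurable borel"
  shows "integrable (nuL br J) h \<longleftrightarrow> integrable (muL br J) (\<lambda>\<xi>. exp (- g \<xi> \<xi> / 2) *\<^sub>R h \<xi>)"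
    and "integral\<^sup>L (nuL br J) h = integral\<^sup>L (muL br J) (\<lambda>\<xi>. exp (- g \<xi> \<xi> / 2) *\<^sub>R h \<xi>)"
proof -
  have wm: "(\<lambda>\<xi>. exp (- g \<xi> \<xi> / 2)) \<in> borel_measurable (muL br J)"
    unfolding muL_def by (simp, intro borel_measurable_continuous_onI continuous_intros) auto
  have hm': "h \<in> borel_measurable (muL br J)" using hm by (simp add: muL_def)
  show "integrable (nuL br J) h \<longleftrightarrow> integrable (muL br J) (\<lambda>\<xi>. exp (- g \<xi> \<xi> / 2) *\<^sub>R h \<xi>)"
    unfolding nuL_def using wm hm' by (intro integrable_density) auto
  show "integral\<^sup>L (nuL br J) h = integral\<^sup>L (muL br J) (\<lambda>\<xi>. exp (- g \<xi> \<xi> / 2) *\<^sub>R h \<xi>)"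
    unfolding nuL_def using wm hm' by (intro integral_density) auto
qed

section \<open>The basic Gaussian pairings\<close>

text \<open>The constraint \<open>4 pa pb + k\<^sup>2 = 1\<close> makes the mass of the Gaussian equal to the normalisation
  constant of \<open>\<mu>_L\<close>, so that no constant survives.\<close>

lemma muL_coupled_gaussian:
  fixes pa pb k :: real and ua ub va vb :: 'q and K :: complex and h :: "'l \<Rightarrow> complex"
  assumes pa: "pa > 0" and pb: "pb > 0" and normalised: "4 * pa * pb + k\<^sup>2 = 1"
    and hm: "h \<in> borel_measurable borel"
    and hT: "\<And>a b. h (T (a, b)) = K * exp (complex_of_real (- pa * (norm a)\<^sup>2 - pb * (norm b)\<^sup>2 + ua \<bullet> a + ub \<bullet> b)
                  + \<i> * complex_of_real (k * (a \<bullet> b) + va \<bullet> a + vb \<bullet> b))"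
  defines "P \<equiv> pa + k\<^sup>2 / (4 * pb)"
  defines "U \<equiv> ua - (k / (2 * pb)) *\<^sub>R vb"
  defines "V \<equiv> va + (k / (2 * pb)) *\<^sub>R ub"
  shows "integrable (muL br J) h"
    and "integral\<^sup>L (muL br J) h = K *
           exp ((complex_of_real ((norm ub)\<^sup>2 - (norm vb)\<^sup>2) + 2 * \<i> * complex_of_real (ub \<bullet> vb)) / complex_of_real (4 * pb)
              + (complex_of_real ((norm U)\<^sup>2 - (norm V)\<^sup>2) + 2 * \<i> * complex_of_real (U \<bullet> V)) / complex_of_real (4 * P))"
proof -
  define F where "F \<equiv> (\<lambda>z::'q\<times>'q. exp (complex_of_real (- pa * (norm (fst z))\<^sup>2 - pb * (norm (snd z))\<^sup>2 + ua \<bullet> fst z + ub \<bullet> snd z)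
                  + \<i> * complex_of_real (k * (fst z \<bullet> snd z) + va \<bullet> fst z + vb \<bullet> snd z)))"
  note G = gaussian_integral_coupled[OF pa pb, of ua ub k va vb, folded F_def P_def U_def V_def]
  have hTF: "h (T z) = K * F z" for z
    by (cases z) (simp add: hT F_def)
  show "integrable (muL br J) h"
    unfolding muL_T(1)[OF hm] hTF using G(1) by simp
  have "(2 * pi)\<^sup>2 = pi / pb * (pi / P)"
    using pb normalised by (simp add: P_def power2_eq_square field_simps)
  then have "sqrt (pi / pb) * sqrt (pi / P) = 2 * pi"
    unfolding real_sqrt_mult[symmetric] using pi_gt_zero by (intro real_sqrt_unique) auto
  then have "(sqrt (pi / pb) * sqrt (pi / P)) ^ DIM('q) = sqrt (2 * pi) ^ (DIM('q) + DIM('q))"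
    by (simp add: power_add[symmetric] mult_2[symmetric] power_mult)
  then have "sqrt (pi / pb) ^ DIM('q) * sqrt (pi / P) ^ DIM('q) = sqrt (2 * pi) ^ (DIM('q) + DIM('q))"
    by (simp only: power_mult_distrib)
  then show "integral\<^sup>L (muL br J) h = K *
           exp ((complex_of_real ((norm ub)\<^sup>2 - (norm vb)\<^sup>2) + 2 * \<i> * complex_of_real (ub \<bullet> vb)) / complex_of_real (4 * pb)
              + (complex_of_real ((norm U)\<^sup>2 - (norm V)\<^sup>2) + 2 * \<i> * complex_of_real (U \<bullet> V)) / complex_of_real (4 * P))"
    unfolding muL_T(2)[OF hm] hTF integral_mult_right_zero G(2)
    by (simp add: scaleR_conv_of_real exp_add)
qed

lemma muQ_gaussian:
  fixes u v :: 'q and K :: complex and h :: "'q \<Rightarrow> complex"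
  assumes hm: "h \<in> borel_measurable borel"
    and hR: "\<And>x. h (R x) = K * exp (complex_of_real (- 1 * (norm x)\<^sup>2) + complex_of_real (u \<bullet> x) + \<i> * complex_of_real (v \<bullet> x))"
  shows "integrable (muQ br J j) h"
    and "integral\<^sup>L (muQ br J j) h =
           K * exp ((complex_of_real ((norm u)\<^sup>2 - (norm v)\<^sup>2) + 2 * \<i> * complex_of_real (u \<bullet> v)) / 4)"
proof -
  note G = gaussian_integral_euclidean[OF zero_less_one, of u v]
  show "integrable (muQ br J j) h"
    unfolding muQ_R(1)[OF hm] hR using G(1) by simp
  show "integral\<^sup>L (muQ br J j) h =
           K * exp ((complex_of_real ((norm u)\<^sup>2 - (norm v)\<^sup>2) + 2 * \<i> * complex_of_real (u \<bullet> v)) / 4)"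
    unfolding muQ_R(2)[OF hm] hR integral_mult_right_zero G(2) by (simp add: scaleR_conv_of_real)
qed

lemma integral_nuL_KH_cnj_Bkern:
  shows "integrable (nuL br J) (\<lambda>\<xi>. KH br J \<tau> \<xi> * cnj (Bkern br J q j \<xi> \<phi>))"
    and "integral\<^sup>L (nuL br J) (\<lambda>\<xi>. KH br J \<tau> \<xi> * cnj (Bkern br J q j \<xi> \<phi>)) = cnj (Bkern br J q j \<tau> \<phi>)"
proof -
  obtain c d x where \<tau>: "\<tau> = T (c, d)" and \<phi>: "\<phi> = R x"
    by (metis T_cover R_cover)
  define h where "h = (\<lambda>\<xi>. KH br J \<tau> \<xi> * cnj (Bkern br J q j \<xi> \<phi>))"
  have hm: "h \<in> borel_measurable borel"
    unfolding h_def by (intro borel_measurable_continuous_onI continuous_intros)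
  define K0 where "K0 = complex_of_real (- (x \<bullet> x) / 2) + \<i> * complex_of_real (s x / 2)"
  have hT: "exp (- g (T (a, b)) (T (a, b)) / 2) *\<^sub>R h (T (a, b)) = exp K0 *
      exp (complex_of_real (- (1/4) * (norm a)\<^sup>2 - (3/4) * (norm b)\<^sup>2 + ((1/2) *\<^sub>R c) \<bullet> a + ((1/2) *\<^sub>R d + x) \<bullet> b)
         + \<i> * complex_of_real ((1/2) * (a \<bullet> b) + ((1/2) *\<^sub>R d - x) \<bullet> a + (- (1/2) *\<^sub>R c) \<bullet> b))" for a b
    unfolding h_def \<tau> \<phi> KH_T cnj_Bkern_T_R T_g K0_def
    by (simp only: mult_exp_exp scaleR_exp_exp, rule arg_cong[where f=exp])
      (simp add: complex_eq_iff power2_norm_eq_inner inner_add_left inner_add_right inner_diff_left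
        inner_diff_right inner_commute field_simps)
  have wm: "(\<lambda>\<xi>. exp (- g \<xi> \<xi> / 2) *\<^sub>R h \<xi>) \<in> borel_measurable borel"
    unfolding h_def by (intro borel_measurable_continuous_onI continuous_intros) auto
  have "(1/4::real) > 0" "(3/4::real) > 0" "4 * (1/4) * (3/4) + (1/2::real)\<^sup>2 = 1"
    by (simp_all add: power2_eq_square)
  note G = muL_coupled_gaussian[where h="\<lambda>\<xi>. exp (- g \<xi> \<xi> / 2) *\<^sub>R h \<xi>", OF this wm hT]
  have "integrable (nuL br J) h"
    using G(1) nuL_muL(1)[OF hm] by simp
  then show "integrable (nuL br J) (\<lambda>\<xi>. KH br J \<tau> \<xi> * cnj (Bkern br J q j \<xi> \<phi>))"
    by (simp add: h_def)
  have "integral\<^sup>L (nuL br J) h = cnj (Bkern br J q j \<tau> \<phi>)"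
    unfolding nuL_muL(2)[OF hm] G(2) \<tau> \<phi> cnj_Bkern_T_R mult_exp_exp K0_def
    by (rule arg_cong[where f=exp])
      (simp add: complex_eq_iff power2_norm_eq_inner inner_add_left inner_add_right inner_diff_left
        inner_diff_right inner_commute field_simps)
  then show "integral\<^sup>L (nuL br J) (\<lambda>\<xi>. KH br J \<tau> \<xi> * cnj (Bkern br J q j \<xi> \<phi>)) = cnj (Bkern br J q j \<tau> \<phi>)"
    by (simp add: h_def)
qed

lemma integral_muQ_cnj_Bkern_Bkern:
  shows "integrable (muQ br J j) (\<lambda>\<phi>. cnj (Bkern br J q j \<tau> \<phi>) * Bkern br J q j \<xi> \<phi>)"
    and "integral\<^sup>L (muQ br J j) (\<lambda>\<phi>. cnj (Bkern br J q j \<tau> \<phi>) * Bkern br J q j \<xi> \<phi>) = KH br J \<tau> \<xi>"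
proof -
  obtain c d a b where \<tau>: "\<tau> = T (c, d)" and \<xi>: "\<xi> = T (a, b)"
    by (metis T_cover)
  define h where "h = (\<lambda>\<phi>. cnj (Bkern br J q j \<tau> \<phi>) * Bkern br J q j \<xi> \<phi>)"
  have hm: "h \<in> borel_measurable borel"
    unfolding h_def by (intro borel_measurable_continuous_onI continuous_intros)
  define K0 where "K0 = complex_of_real ((c \<bullet> c - d \<bullet> d + a \<bullet> a - b \<bullet> b) / 4)
    + \<i> * complex_of_real ((c \<bullet> d - a \<bullet> b) / 2)"
  have hR: "h (R x) = exp K0 * exp (complex_of_real (- 1 * (norm x)\<^sup>2) + complex_of_real ((d + b) \<bullet> x)
      + \<i> * complex_of_real ((a - c) \<bullet> x))" for x
    unfolding h_def \<tau> \<xi> Bkern_T_R K0_def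
    by (simp only: exp_cnj mult_exp_exp, rule arg_cong[where f=exp])
      (simp add: complex_eq_iff power2_norm_eq_inner inner_add_left inner_add_right inner_diff_left
        inner_diff_right inner_commute field_simps)
  note G = muQ_gaussian[OF hm hR]
  show "integrable (muQ br J j) (\<lambda>\<phi>. cnj (Bkern br J q j \<tau> \<phi>) * Bkern br J q j \<xi> \<phi>)"
    using G(1) by (simp add: h_def)
  have "integral\<^sup>L (muQ br J j) h = KH br J \<tau> \<xi>"
    unfolding G(2) \<tau> \<xi> KH_T mult_exp_exp K0_def
    by (rule arg_cong[where f=exp])
      (simp add: complex_eq_iff power2_norm_eq_inner inner_add_left inner_add_right inner_diff_left
        inner_diff_right inner_commute field_simps)
  then show "integral\<^sup>L (muQ br J j) (\<lambda>\<phi>. cnj (Bkern br J q j \<tau> \<phi>) * Bkern br J q j \<xi> \<phi>) = KH br J \<tau> \<xi>"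
    by (simp add: h_def)
qed

lemma integral_muQ_Bkern_cnj_Bkern:
  shows "integrable (muQ br J j) (\<lambda>\<phi>. Bkern br J q j \<sigma> \<phi> * cnj (Bkern br J q j \<tau> \<phi>))"
    and "integral\<^sup>L (muQ br J j) (\<lambda>\<phi>. Bkern br J q j \<sigma> \<phi> * cnj (Bkern br J q j \<tau> \<phi>)) = KH br J \<tau> \<sigma>"
  using integral_muQ_cnj_Bkern_Bkern[of \<tau> \<sigma>] by (simp_all add: mult.commute)

lemma integral_nuL_cnj_KH_KH:
  shows "integrable (nuL br J) (\<lambda>\<xi>. cnj (KH br J \<sigma> \<xi>) * KH br J \<tau> \<xi>)"
    and "integral\<^sup>L (nuL br J) (\<lambda>\<xi>. cnj (KH br J \<sigma> \<xi>) * KH br J \<tau> \<xi>) = KH br J \<tau> \<sigma>"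
proof -
  obtain c' d' c d where \<sigma>: "\<sigma> = T (c', d')" and \<tau>: "\<tau> = T (c, d)"
    by (metis T_cover)
  define h where "h = (\<lambda>\<xi>. cnj (KH br J \<sigma> \<xi>) * KH br J \<tau> \<xi>)"
  have hm: "h \<in> borel_measurable borel"
    unfolding h_def by (intro borel_measurable_continuous_onI continuous_intros)
  have hT: "exp (- g (T (a, b)) (T (a, b)) / 2) *\<^sub>R h (T (a, b)) = 1 *
      exp (complex_of_real (- (1/2) * (norm a)\<^sup>2 - (1/2) * (norm b)\<^sup>2 + ((1/2) *\<^sub>R (c' + c)) \<bullet> a + ((1/2) *\<^sub>R (d' + d)) \<bullet> b)
         + \<i> * complex_of_real (0 * (a \<bullet> b) + ((1/2) *\<^sub>R (d - d')) \<bullet> a + ((1/2) *\<^sub>R (c' - c)) \<bullet> b))" for a b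
    unfolding h_def \<sigma> \<tau> KH_T T_g
    by (simp only: exp_cnj mult_exp_exp scaleR_exp_exp mult_1, rule arg_cong[where f=exp])
      (simp add: complex_eq_iff power2_norm_eq_inner inner_add_left inner_add_right inner_diff_left
        inner_diff_right inner_commute field_simps)
  have wm: "(\<lambda>\<xi>. exp (- g \<xi> \<xi> / 2) *\<^sub>R h \<xi>) \<in> borel_measurable borel"
    unfolding h_def by (intro borel_measurable_continuous_onI continuous_intros) auto
  have "(1/2::real) > 0" "4 * (1/2) * (1/2) + (0::real)\<^sup>2 = 1"
    by simp_all
  note G = muL_coupled_gaussian[where h="\<lambda>\<xi>. exp (- g \<xi> \<xi> / 2) *\<^sub>R h \<xi>", OF this(1) this wm hT]
  have "integrable (nuL br J) h"
    using G(1) nuL_muL(1)[OF hm] by simp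
  then show "integrable (nuL br J) (\<lambda>\<xi>. cnj (KH br J \<sigma> \<xi>) * KH br J \<tau> \<xi>)"
    by (simp add: h_def)
  have "integral\<^sup>L (nuL br J) h = KH br J \<tau> \<sigma>"
    unfolding nuL_muL(2)[OF hm] G(2) \<sigma> \<tau> KH_T mult_1
    by (rule arg_cong[where f=exp])
      (simp add: complex_eq_iff power2_norm_eq_inner inner_add_left inner_add_right inner_diff_left
        inner_diff_right inner_commute field_simps)
  then show "integral\<^sup>L (nuL br J) (\<lambda>\<xi>. cnj (KH br J \<sigma> \<xi>) * KH br J \<tau> \<xi>) = KH br J \<tau> \<sigma>"
    by (simp add: h_def)
qed

lemma integral_muL_cnj_KH_cnj_Bkern_alpha:
  shows "integrable (muL br J)
      (\<lambda>\<xi>. cnj (KH br J \<sigma> \<xi>) * (cnj (Bkern br J q j \<tau> (q \<xi>)) * cnj (alpha br J \<xi>)))"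
    and "integral\<^sup>L (muL br J)
      (\<lambda>\<xi>. cnj (KH br J \<sigma> \<xi>) * (cnj (Bkern br J q j \<tau> (q \<xi>)) * cnj (alpha br J \<xi>))) = KH br J \<tau> \<sigma>"
proof -
  obtain c' d' c d where \<sigma>: "\<sigma> = T (c', d')" and \<tau>: "\<tau> = T (c, d)"
    by (metis T_cover)
  define h where "h = (\<lambda>\<xi>. cnj (KH br J \<sigma> \<xi>) * (cnj (Bkern br J q j \<tau> (q \<xi>)) * cnj (alpha br J \<xi>)))"
  have hm: "h \<in> borel_measurable borel"
    unfolding h_def
    by (intro borel_measurable_continuous_onI continuous_intros linear_continuous_on_compose[OF _ q_lin])
  define K0 where "K0 = complex_of_real ((c \<bullet> c - d \<bullet> d) / 4) + \<i> * complex_of_real (c \<bullet> d / 2)"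
  have hT: "h (T (a, b)) = exp K0 *
      exp (complex_of_real (- (1/4) * (norm a)\<^sup>2 - (3/4) * (norm b)\<^sup>2 + ((1/2) *\<^sub>R c') \<bullet> a + ((1/2) *\<^sub>R d' + d) \<bullet> b)
         + \<i> * complex_of_real ((1/2) * (a \<bullet> b) + (- (1/2) *\<^sub>R d') \<bullet> a + ((1/2) *\<^sub>R c' - c) \<bullet> b))" for a b
    unfolding h_def \<sigma> \<tau> KH_T q_T cnj_Bkern_T_R cnj_alpha_T K0_def
    by (simp only: exp_cnj mult_exp_exp, rule arg_cong[where f=exp])
      (simp add: complex_eq_iff power2_norm_eq_inner inner_add_left inner_add_right inner_diff_left
        inner_diff_right inner_commute field_simps)
  have "(1/4::real) > 0" "(3/4::real) > 0" "4 * (1/4) * (3/4) + (1/2::real)\<^sup>2 = 1"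
    by (simp_all add: power2_eq_square)
  note G = muL_coupled_gaussian[OF this hm hT]
  show "integrable (muL br J)
      (\<lambda>\<xi>. cnj (KH br J \<sigma> \<xi>) * (cnj (Bkern br J q j \<tau> (q \<xi>)) * cnj (alpha br J \<xi>)))"
    using G(1) by (simp add: h_def)
  have "integral\<^sup>L (muL br J) h = KH br J \<tau> \<sigma>"
    unfolding G(2) \<sigma> \<tau> KH_T mult_exp_exp K0_def
    by (rule arg_cong[where f=exp])
      (simp add: complex_eq_iff power2_norm_eq_inner inner_add_left inner_add_right inner_diff_left
        inner_diff_right inner_commute field_simps)
  then show "integral\<^sup>L (muL br J)
      (\<lambda>\<xi>. cnj (KH br J \<sigma> \<xi>) * (cnj (Bkern br J q j \<tau> (q \<xi>)) * cnj (alpha br J \<xi>))) = KH br J \<tau> \<sigma>"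
    by (simp add: h_def)
qed

lemma integral_muL_Bkern_KH_alpha:
  shows "integrable (muL br J) (\<lambda>\<xi>. Bkern br J q j \<sigma> (q \<xi>) * (KH br J \<tau> \<xi> * alpha br J \<xi>))"
    and "integral\<^sup>L (muL br J) (\<lambda>\<xi>. Bkern br J q j \<sigma> (q \<xi>) * (KH br J \<tau> \<xi> * alpha br J \<xi>)) = KH br J \<tau> \<sigma>"
proof -
  note G = integral_muL_cnj_KH_cnj_Bkern_alpha[of \<tau> \<sigma>]
  have eq: "(\<lambda>\<xi>. Bkern br J q j \<sigma> (q \<xi>) * (KH br J \<tau> \<xi> * alpha br J \<xi>)) =
      (\<lambda>\<xi>. cnj (cnj (KH br J \<tau> \<xi>) * (cnj (Bkern br J q j \<sigma> (q \<xi>)) * cnj (alpha br J \<xi>))))"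
    by (simp add: mult_ac)
  show "integrable (muL br J) (\<lambda>\<xi>. Bkern br J q j \<sigma> (q \<xi>) * (KH br J \<tau> \<xi> * alpha br J \<xi>))"
    unfolding eq using G(1) by (rule integrable_cnj)
  show "integral\<^sup>L (muL br J) (\<lambda>\<xi>. Bkern br J q j \<sigma> (q \<xi>) * (KH br J \<tau> \<xi> * alpha br J \<xi>)) = KH br J \<tau> \<sigma>"
    unfolding eq Bochner_Integration.integral_cnj G(2) by (rule cnj_KH)
qed

section \<open>The transform\<close>

definition HSc :: "('q \<Rightarrow> complex) set" where
  "HSc = lincombs (\<lambda>\<tau> \<phi>. cnj (Bkern br J q j \<tau> \<phi>))"

definition bargmann :: "('q \<Rightarrow> complex) \<Rightarrow> 'l \<Rightarrow> complex" where
  "bargmann \<psi> \<xi> = integral\<^sup>L (muQ br J j) (\<lambda>\<phi>. \<psi> \<phi> * Bkern br J q j \<xi> \<phi>)"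

definition bargmann_inv :: "('l \<Rightarrow> complex) \<Rightarrow> 'q \<Rightarrow> complex" where
  "bargmann_inv \<psi> \<phi> = integral\<^sup>L (nuL br J) (\<lambda>\<xi>. \<psi> \<xi> * cnj (Bkern br J q j \<xi> \<phi>))"

lemma bargmann_lincomb:
  "bargmann (\<lambda>\<phi>. \<Sum>\<tau>\<in>S. c \<tau> * cnj (Bkern br J q j \<tau> \<phi>)) = (\<lambda>\<xi>. \<Sum>\<tau>\<in>S. c \<tau> * KH br J \<tau> \<xi>)"
  unfolding bargmann_def[abs_def]
  by (rule integral_kernel_lincomb(2)) (fact integral_muQ_cnj_Bkern_Bkern)+

lemma bargmann_inv_lincomb:
  "bargmann_inv (\<lambda>\<xi>. \<Sum>\<tau>\<in>S. c \<tau> * KH br J \<tau> \<xi>) = (\<lambda>\<phi>. \<Sum>\<tau>\<in>S. c \<tau> * cnj (Bkern br J q j \<tau> \<phi>))"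
  unfolding bargmann_inv_def[abs_def]
  by (rule integral_kernel_lincomb(2)) (fact integral_nuL_KH_cnj_Bkern)+

lemmas bargmann_bij = lincombs_inverse_maps[OF bargmann_lincomb bargmann_inv_lincomb,
    folded HSc_def HHc_eq_lincombs]

lemma HSc_subset_L2Q: "HSc \<subseteq> L2Q br J j"
proof
  fix \<psi> assume "\<psi> \<in> HSc"
  then obtain S c where \<psi>: "\<psi> = (\<lambda>\<phi>. \<Sum>\<tau>\<in>S. c \<tau> * cnj (Bkern br J q j \<tau> \<phi>))"
    unfolding HSc_def by (auto elim: lincombsE)
  have m: "\<psi> \<in> borel_measurable borel"
    unfolding \<psi> by (intro borel_measurable_continuous_onI continuous_intros)
  have "integrable (muQ br J j) (\<lambda>\<phi>. cnj (\<psi> \<phi>) * \<psi> \<phi>)"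
    unfolding \<psi> by (rule integral_cnj_lincomb_mult(1)) (simp add: integral_muQ_Bkern_cnj_Bkern(1))
  then have "integrable (muQ br J j) (\<lambda>\<phi>. Re (cnj (\<psi> \<phi>) * \<psi> \<phi>))"
    by (rule integrable_Re)
  moreover have "Re (cnj z * z) = (cmod z)\<^sup>2" for z
    by (metis Re_complex_of_real complex_norm_square mult.commute)
  ultimately have "integrable (muQ br J j) (\<lambda>\<phi>. (cmod (\<psi> \<phi>))\<^sup>2)"
    by simp
  with m show "\<psi> \<in> L2Q br J j"
    by (simp add: L2Q_def muQ_def)
qed

lemma bargmann_add:
  assumes "\<psi>1 \<in> HSc" "\<psi>2 \<in> HSc"
  shows "bargmann (\<lambda>\<phi>. a * \<psi>1 \<phi> + \<psi>2 \<phi>) = (\<lambda>\<xi>. a * bargmann \<psi>1 \<xi> + bargmann \<psi>2 \<xi>)"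
proof
  fix \<xi>
  have int: "integrable (muQ br J j) (\<lambda>\<phi>. \<psi> \<phi> * Bkern br J q j \<xi> \<phi>)" if "\<psi> \<in> HSc" for \<psi>
    using that unfolding HSc_def
    by (auto elim!: lincombsE intro: integral_kernel_lincomb(1) integral_muQ_cnj_Bkern_Bkern)
  show "bargmann (\<lambda>\<phi>. a * \<psi>1 \<phi> + \<psi>2 \<phi>) \<xi> = a * bargmann \<psi>1 \<xi> + bargmann \<psi>2 \<xi>"
    using int[OF assms(1)] int[OF assms(2)]
    by (simp add: bargmann_def distrib_right mult.assoc)
qed

lemma bargmann_isometric:
  assumes "\<psi> \<in> HSc"
  shows "innerH br J (bargmann \<psi>) (bargmann \<psi>) = innerS br J j \<psi> \<psi>"
proof -
  obtain S c where \<psi>: "\<psi> = (\<lambda>\<phi>. \<Sum>\<tau>\<in>S. c \<tau> * cnj (Bkern br J q j \<tau> \<phi>))"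
    using assms unfolding HSc_def by (auto elim: lincombsE)
  show ?thesis
    unfolding innerH_def innerS_def \<psi> bargmann_lincomb
    by (rule integral_cnj_lincomb_mult_eq)
      (simp_all add: integral_nuL_cnj_KH_KH integral_muQ_Bkern_cnj_Bkern)
qed

lemma innerH_bargmann:
  assumes "\<psi>' \<in> HHc br J" "\<psi> \<in> HSc"
  shows "innerH br J \<psi>' (bargmann \<psi>) =
    integral\<^sup>L (muL br J) (\<lambda>\<xi>. cnj (\<psi>' \<xi>) * \<psi> (q \<xi>) * cnj (alpha br J \<xi>))"
proof -
  obtain S' c' where \<psi>': "\<psi>' = (\<lambda>\<xi>. \<Sum>\<sigma>\<in>S'. c' \<sigma> * KH br J \<sigma> \<xi>)"
    using assms(1) unfolding HHc_eq_lincombs by (auto elim: lincombsE)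
  obtain S c where \<psi>: "\<psi> = (\<lambda>\<phi>. \<Sum>\<tau>\<in>S. c \<tau> * cnj (Bkern br J q j \<tau> \<phi>))"
    using assms(2) unfolding HSc_def by (auto elim: lincombsE)
  have "innerH br J \<psi>' (bargmann \<psi>) = integral\<^sup>L (muL br J) (\<lambda>\<xi>. cnj (\<psi>' \<xi>) *
      (\<Sum>\<tau>\<in>S. c \<tau> * (cnj (Bkern br J q j \<tau> (q \<xi>)) * cnj (alpha br J \<xi>))))"
    unfolding innerH_def \<psi>' \<psi> bargmann_lincomb
    by (rule integral_cnj_lincomb_mult_eq)
      (simp_all add: integral_nuL_cnj_KH_KH integral_muL_cnj_KH_cnj_Bkern_alpha)
  also have "\<dots> = integral\<^sup>L (muL br J) (\<lambda>\<xi>. cnj (\<psi>' \<xi>) * \<psi> (q \<xi>) * cnj (alpha br J \<xi>))"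
    unfolding \<psi> by (simp add: sum_distrib_right mult.assoc)
  finally show ?thesis .
qed

lemma innerS_bargmann_inv:
  assumes "\<psi>' \<in> HSc" "\<psi> \<in> HHc br J"
  shows "innerS br J j \<psi>' (bargmann_inv \<psi>) =
    integral\<^sup>L (muL br J) (\<lambda>\<xi>. cnj (\<psi>' (q \<xi>)) * \<psi> \<xi> * alpha br J \<xi>)"
proof -
  obtain S' c' where \<psi>': "\<psi>' = (\<lambda>\<phi>. \<Sum>\<sigma>\<in>S'. c' \<sigma> * cnj (Bkern br J q j \<sigma> \<phi>))"
    using assms(1) unfolding HSc_def by (auto elim: lincombsE)
  obtain S c where \<psi>: "\<psi> = (\<lambda>\<xi>. \<Sum>\<tau>\<in>S. c \<tau> * KH br J \<tau> \<xi>)"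
    using assms(2) unfolding HHc_eq_lincombs by (auto elim: lincombsE)
  have "innerS br J j \<psi>' (bargmann_inv \<psi>) = integral\<^sup>L (muL br J) (\<lambda>\<xi>.
      cnj (\<Sum>\<sigma>\<in>S'. c' \<sigma> * cnj (Bkern br J q j \<sigma> (q \<xi>))) * (\<Sum>\<tau>\<in>S. c \<tau> * (KH br J \<tau> \<xi> * alpha br J \<xi>)))"
    unfolding innerS_def \<psi>' \<psi> bargmann_inv_lincomb
    by (rule integral_cnj_lincomb_mult_eq)
      (simp_all add: integral_muQ_Bkern_cnj_Bkern integral_muL_Bkern_KH_alpha)
  also have "\<dots> = integral\<^sup>L (muL br J) (\<lambda>\<xi>. cnj (\<psi>' (q \<xi>)) * \<psi> \<xi> * alpha br J \<xi>)"
    unfolding \<psi> \<psi>' by (simp add: sum_distrib_right mult.assoc)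
  finally show ?thesis .
qed

end

theorem proposition3p1:
  fixes br :: "'l::euclidean_space \<Rightarrow> 'l \<Rightarrow> real"
    and J :: "'l \<Rightarrow> 'l"
    and q :: "'l \<Rightarrow> 'q::euclidean_space"
    and j :: "'q \<Rightarrow> 'l"
  assumes bil: "bilinear br"
    and nondeg: "\<forall>x. (\<forall>y. omega br x y = 0) \<longrightarrow> x = 0"
    and dsum_int: "Mspace br \<inter> Nspace br = {0}"
    and dsum_span: "\<forall>x. \<exists>m\<in>Mspace br. \<exists>n\<in>Nspace br. x = m + n"
    and J_lin: "linear J"
    and J_sq: "\<forall>x. J (J x) = - x"
    and J_sympl: "\<forall>x y. omega br (J x) (J y) = omega br x y"
    and g_pos: "\<forall>x. x \<noteq> 0 \<longrightarrow> gform br J x x > 0"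
    and q_lin: "linear q"
    and q_surj: "surj q"
    and q_ker: "{x. q x = 0} = Mspace br"
    and j_lin: "linear j"
    and j_sect: "\<forall>\<phi>. q (j \<phi>) = \<phi>"
    and j_range: "\<forall>\<phi>. j \<phi> \<in> J ` Mspace br"
  shows "\<exists>HSc Bop Binv.
     HSc \<subseteq> L2Q br J j \<and> csubspace_fun HSc \<and>
     Bop ` HSc = HHc br J \<and> Binv ` HHc br J = HSc \<and>
     (\<forall>\<psi>\<in>HSc. Binv (Bop \<psi>) = \<psi>) \<and> (\<forall>\<psi>\<in>HHc br J. Bop (Binv \<psi>) = \<psi>) \<and>
     (\<forall>\<psi>1\<in>HSc. \<forall>\<psi>2\<in>HSc. \<forall>a::complex.
        Bop (\<lambda>\<phi>. a * \<psi>1 \<phi> + \<psi>2 \<phi>) = (\<lambda>\<xi>. a * Bop \<psi>1 \<xi> + Bop \<psi>2 \<xi>)) \<and>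
     (\<forall>\<psi>\<in>HSc. innerH br J (Bop \<psi>) (Bop \<psi>) = innerS br J j \<psi> \<psi>) \<and>
     (\<forall>\<psi>\<in>HSc. \<forall>\<xi>. Bop \<psi> \<xi> =
        integral\<^sup>L (muQ br J j) (\<lambda>\<phi>. \<psi> \<phi> * Bkern br J q j \<xi> \<phi>)) \<and>
     (\<forall>\<psi>\<in>HHc br J. \<forall>\<phi>. Binv \<psi> \<phi> =
        integral\<^sup>L (nuL br J) (\<lambda>\<xi>. \<psi> \<xi> * cnj (Bkern br J q j \<xi> \<phi>))) \<and>
     (\<forall>\<psi>'\<in>HHc br J. \<forall>\<psi>\<in>HSc. innerH br J \<psi>' (Bop \<psi>) =
        integral\<^sup>L (muL br J) (\<lambda>\<xi>. cnj (\<psi>' \<xi>) * \<psi> (q \<xi>) * cnj (alpha br J \<xi>))) \<and>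
     (\<forall>\<psi>'\<in>HSc. \<forall>\<psi>\<in>HHc br J. innerS br J j \<psi>' (Binv \<psi>) =
        integral\<^sup>L (muL br J) (\<lambda>\<xi>. cnj (\<psi>' (q \<xi>)) * \<psi> \<xi> * alpha br J \<xi>)) \<and>
     (\<forall>\<tau> \<phi>. Binv (KH br J \<tau>) \<phi> = cnj (Bkern br J q j \<tau> \<phi>))"
proof -
  txt \<open>Non-degeneracy of \<open>\<omega>\<close>, the splitting \<open>L = M \<oplus> N\<close> and surjectivity of \<open>q\<close> are not needed:
    the coordinates come from positivity of \<open>g\<close> and the section \<open>j\<close> alone.\<close>
  interpret bargmann_setting br J q j
    by (intro bargmann_setting.intro; fact)
  show ?thesis
  proof (intro exI[of _ HSc] exI[of _ bargmann] exI[of _ bargmann_inv] conjI ballI allI)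
    show "HSc \<subseteq> L2Q br J j" by (rule HSc_subset_L2Q)
    show "csubspace_fun HSc" unfolding HSc_def by (rule csubspace_fun_lincombs)
  qed (simp_all add: bargmann_bij bargmann_add bargmann_isometric innerH_bargmann innerS_bargmann_inv
      integral_nuL_KH_cnj_Bkern bargmann_def bargmann_inv_def)
qed

end
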